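(* Assume $\mathcal H$ is finite-dimensional and the gradients $\nabla f_i$ are globally Lipschitz continuous. Let $\alpha>0$ and $t_0>0$. Then for all $(u_0,v_0)\in\mathcal H\times\mathcal H$ there exist $T>t_0$ and an absolutely continuous function $(u(\cdot),v(\cdot)):[t_0,T]\to\mathcal H\times\mathcal H$ which solves the differential inclusion $$(\dot u(t),\dot v(t))\in G(t,u(t),v(t))\ \text{ for almost all } t\in(t_0,T],\qquad (u(t_0),v(t_0))=(u_0,v_0),$$ where $G(t,u,v)=\{v\}\times\big(-\frac{\alpha}{t}v-\arg\min_{g\in C(u)}\langle g,-v\rangle\big)$.
   Context: $\mathcal H$ is a real Hilbert space. $f_1,\dots,f_m:\mathcal H\to\mathbb R$ are convex and continuously differentiable. $C(u)=\operatorname{co}\{\nabla f_i(u):i=1,\dots,m\}$. *)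

theory Defs
  imports "HOL-Analysis.Analysis"
begin

definition abs_continuous_on ::
  "real \<Rightarrow> real \<Rightarrow> (real \<Rightarrow> 'b::real_normed_vector) \<Rightarrow> bool" where
  "abs_continuous_on a b f \<longleftrightarrow>
     (\<forall>\<epsilon>>0. \<exists>\<delta>>0. \<forall>(n::nat) (s::nat \<Rightarrow> real) (t::nat \<Rightarrow> real).
        (\<forall>k<n. a \<le> s k \<and> s k \<le> t k \<and> t k \<le> b) \<and>
        (\<forall>j<n. \<forall>k<n. j \<noteq> k \<longrightarrow> t j \<le> s k \<or> t k \<le> s j) \<and>
        (\<Sum>k<n. t k - s k) < \<delta>
        \<longrightarrow> (\<Sum>k<n. norm (f (t k) - f (s k))) < \<epsilon>)"

definition argmin_set :: "'a set \<Rightarrow> ('a \<Rightarrow> real) \<Rightarrow> 'a set" where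
  "argmin_set S \<phi> = {g \<in> S. \<forall>h\<in>S. \<phi> g \<le> \<phi> h}"

text \<open>C(u) = co { grad f_i(u) : i = 1..m }, where gf i is the gradient of f_i.\<close>
definition Cset :: "nat \<Rightarrow> (nat \<Rightarrow> 'a::real_inner \<Rightarrow> 'a) \<Rightarrow> 'a \<Rightarrow> 'a set" where
  "Cset m gf u = convex hull {gf i u | i. i \<in> {1..m}}"

definition Gmap :: "real \<Rightarrow> nat \<Rightarrow> (nat \<Rightarrow> 'a::real_inner \<Rightarrow> 'a) \<Rightarrow> real \<Rightarrow> 'a \<Rightarrow> 'a \<Rightarrow> ('a \<times> 'a) set" where
  "Gmap \<alpha> m gf t u v =
     {v} \<times> ((\<lambda>g. - ((\<alpha> / t) *\<^sub>R v) - g) ` argmin_set (Cset m gf u) (\<lambda>g. g \<bullet> (- v)))"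

end

(*
  The solution is obtained as in Peano's existence theorem for differential inclusions. Select
  from G(t, u, v) a (discontinuous) vector field and follow it by Euler polygons with step
  sizes tending to 0. Near the initial data the field is bounded, so on a short interval
  [t0, T] the polygons are uniformly Lipschitz, and by Arzela-Ascoli a subsequence converges to
  a Lipschitz function x. Hence x is absolutely continuous and, by Lebesgue's differentiation
  theorem for Lipschitz functions (a consequence of the Vitali covering theorem),
  differentiable almost everywhere. Where x is differentiable, its difference quotients are
  limits of averages of slopes of the polygons, that is of values of G at nearby points; as G
  is upper semicontinuous with compact convex values, the derivative lies in G(t, x t).
*)
theory Submission
  imports Defs "HOL-Complex_Analysis.Great_Picard"
begin

section \<open>Lebesgue's differentiation theorem for Lipschitz functions\<close>

definition slope_below :: "(real \<Rightarrow> real) \<Rightarrow> real \<Rightarrow> real \<Rightarrow> bool" where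
  "slope_below \<phi> x p \<longleftrightarrow>
     (\<forall>\<delta>>0. \<exists>c d. c < x \<and> x < d \<and> d - c < \<delta> \<and> \<phi> d - \<phi> c < p * (d - c))"

definition slope_above :: "(real \<Rightarrow> real) \<Rightarrow> real \<Rightarrow> real \<Rightarrow> bool" where
  "slope_above \<phi> x q \<longleftrightarrow>
     (\<forall>\<delta>>0. \<exists>c d. c < x \<and> x < d \<and> d - c < \<delta> \<and> \<phi> d - \<phi> c > q * (d - c))"

lemma emeasure_interval_measure_ball:
  fixes \<phi> :: "real \<Rightarrow> real"
  assumes "mono \<phi>" "continuous_on UNIV \<phi>" "0 < r"
  shows "emeasure (interval_measure \<phi>) (ball c r) = \<phi> (c + r) - \<phi> (c - r)"
proof -
  let ?M = "interval_measure \<phi>"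
  have Icc: "emeasure ?M {x..y} = \<phi> y - \<phi> x" if "x \<le> y" for x y
    using emeasure_interval_measure_Icc[OF that] assms by (simp add: monoD)
  have "ball c r = {c - r..c + r} - {c - r, c + r}"
    using assms(3) by (auto simp: ball_eq_greaterThanLessThan)
  moreover have "emeasure ?M {c - r, c + r} = 0"
    using Icc[of "c - r" "c - r"] Icc[of "c + r" "c + r"]
    by (subst emeasure_eq_sum_singleton) auto
  ultimately show ?thesis
    using Icc[of "c - r" "c + r"] assms(3)
    by (simp add: emeasure_Diff_null_set null_setsI)
qed

lemma Vitali_cover_by_balls_of_intervals:
  fixes E W :: "real set"
  assumes "open W" "E \<subseteq> W"
    and small: "\<And>x \<delta>. x \<in> E \<Longrightarrow> 0 < \<delta> \<Longrightarrow> \<exists>c d. c < x \<and> x < d \<and> d - c < \<delta> \<and> P c d"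
  obtains C where "countable C" "disjoint_family_on (\<lambda>i. ball (fst i) (snd i)) C"
    "\<And>i. i \<in> C \<Longrightarrow> 0 < snd i \<and> ball (fst i) (snd i) \<subseteq> W \<and> P (fst i - snd i) (fst i + snd i)"
    "negligible (E - (\<Union>i\<in>C. ball (fst i) (snd i)))"
proof -
  define K where "K = {i. 0 < snd i \<and> ball (fst i) (snd i) \<subseteq> W \<and> P (fst i - snd i) (fst i + snd i)}"
  have "\<exists>i. i \<in> K \<and> x \<in> ball (fst i) (snd i) \<and> snd i < \<delta>" if "x \<in> E" "0 < \<delta>" for x \<delta>
  proof -
    obtain e where e: "0 < e" "ball x e \<subseteq> W"
      using assms(1,2) \<open>x \<in> E\<close> open_contains_ball by blast
    obtain c d where cd: "c < x" "x < d" "d - c < min e \<delta>" "P c d"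
      using small[OF \<open>x \<in> E\<close>] e(1) \<open>0 < \<delta>\<close> by (metis min_less_iff_conj)
    have ball: "ball ((c + d) / 2) ((d - c) / 2) = {c<..<d}"
      by (auto simp: ball_eq_greaterThanLessThan field_simps)
    have "{c<..<d} \<subseteq> ball x e"
      using cd by (auto simp: dist_real_def)
    then show ?thesis
      using cd e ball by (intro exI[of _ "((c + d) / 2, (d - c) / 2)"]) (auto simp: K_def field_simps)
  qed
  then obtain C where "countable C" "C \<subseteq> K"
    "pairwise (\<lambda>i j. disjnt (ball (fst i) (snd i)) (ball (fst j) (snd j))) C"
    "negligible (E - (\<Union>i\<in>C. ball (fst i) (snd i)))"
    by (rule Vitali_covering_theorem_balls[of E K fst snd]) blast
  then show thesis
    by (intro that) (auto simp: K_def disjoint_family_on_def pairwise_def disjnt_def)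
qed

lemma emeasure_countable_disjoint_UN_le:
  assumes "countable C" "disjoint_family_on B C" "\<And>i. i \<in> C \<Longrightarrow> B i \<in> sets M"
    "sets N = sets M" "\<And>i. i \<in> C \<Longrightarrow> a * emeasure M (B i) \<le> b * emeasure N (B i)"
  shows "a * emeasure M (\<Union>i\<in>C. B i) \<le> b * emeasure N (\<Union>i\<in>C. B i)"
proof -
  have "a * emeasure M (\<Union>i\<in>C. B i) = (\<integral>\<^sup>+ i. a * emeasure M (B i) \<partial>count_space C)"
    using assms(1-3) by (simp add: emeasure_UN_countable nn_integral_cmult)
  also have "\<dots> \<le> (\<integral>\<^sup>+ i. b * emeasure N (B i) \<partial>count_space C)"
    using assms(5) by (intro nn_integral_mono) simp
  also have "\<dots> = b * emeasure N (\<Union>i\<in>C. B i)"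
    using assms(1-4) by (simp add: emeasure_UN_countable nn_integral_cmult)
  finally show ?thesis .
qed

text \<open>On the balls where the slope is below \<open>p\<close>, the Stieltjes measure of \<open>\<phi>\<close> is at most \<open>p\<close> times
  Lebesgue measure; inside them, on the balls where the slope is above \<open>q\<close>, it is at least \<open>q\<close> times
  Lebesgue measure.\<close>
lemma open_subset_shrink_slope_below_above:
  fixes \<phi> :: "real \<Rightarrow> real"
  assumes mono: "mono \<phi>" and cont: "continuous_on UNIV \<phi>"
    and W: "open W" "E \<subseteq> W"
    and slopes: "\<And>x. x \<in> E \<Longrightarrow> slope_below \<phi> x p \<and> slope_above \<phi> x q"
  obtains W' where "open W'" "W' \<subseteq> W" "q * emeasure lborel W' \<le> p * emeasure lborel W"
    "negligible (E - W')"
proof -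
  let ?M = "interval_measure \<phi>" and ?B = "\<lambda>i. ball (fst i) (snd i)"
  have M_ball: "emeasure ?M (?B i) = \<phi> (fst i + snd i) - \<phi> (fst i - snd i)"
    and lborel_ball: "emeasure lborel (?B i) = 2 * snd i" if "0 < snd i" for i :: "real \<times> real"
    using emeasure_interval_measure_ball[OF mono cont that] that
    by (simp_all add: ball_eq_greaterThanLessThan)
  obtain C1 where C1: "countable C1" "disjoint_family_on ?B C1"
      "\<And>i. i \<in> C1 \<Longrightarrow> 0 < snd i \<and> ?B i \<subseteq> W \<and>
          \<phi> (fst i + snd i) - \<phi> (fst i - snd i) < p * ((fst i + snd i) - (fst i - snd i))"
      "negligible (E - (\<Union>i\<in>C1. ?B i))"
    by (rule Vitali_cover_by_balls_of_intervals[OF W, where P = "\<lambda>c d. \<phi> d - \<phi> c < p * (d - c)"])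
      (use slopes in \<open>auto simp: slope_below_def\<close>)
  define U1 where "U1 = (\<Union>i\<in>C1. ?B i)"
  obtain C2 where C2: "countable C2" "disjoint_family_on ?B C2"
      "\<And>i. i \<in> C2 \<Longrightarrow> 0 < snd i \<and> ?B i \<subseteq> U1 \<and>
          \<phi> (fst i + snd i) - \<phi> (fst i - snd i) > q * ((fst i + snd i) - (fst i - snd i))"
      "negligible (E \<inter> U1 - (\<Union>i\<in>C2. ?B i))"
    by (rule Vitali_cover_by_balls_of_intervals[of U1 "E \<inter> U1" "\<lambda>c d. \<phi> d - \<phi> c > q * (d - c)"])
      (use slopes in \<open>auto simp: slope_above_def U1_def\<close>)
  define U2 where "U2 = (\<Union>i\<in>C2. ?B i)"
  have "U2 \<subseteq> U1" "U1 \<subseteq> W"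
    using C1(3) C2(3) unfolding U1_def U2_def by (fastforce+)
  have "q * emeasure lborel (?B i) \<le> 1 * emeasure ?M (?B i)" if "i \<in> C2" for i
    using C2(3)[OF that] by (simp add: M_ball lborel_ball ennreal_mult''[symmetric] ennreal_leI)
  then have "q * emeasure lborel U2 \<le> 1 * emeasure ?M U2"
    unfolding U2_def using C2(1,2) by (intro emeasure_countable_disjoint_UN_le) auto
  also have "\<dots> \<le> 1 * emeasure ?M U1"
    using \<open>U2 \<subseteq> U1\<close> by (simp add: emeasure_mono U1_def open_Union)
  also have "\<dots> \<le> p * emeasure lborel U1"
  proof -
    have "1 * emeasure ?M (?B i) \<le> p * emeasure lborel (?B i)" if "i \<in> C1" for i
      using C1(3)[OF that] by (simp add: M_ball lborel_ball ennreal_mult''[symmetric] ennreal_leI)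
    then show ?thesis
      unfolding U1_def using C1(1,2) by (intro emeasure_countable_disjoint_UN_le) auto
  qed
  also have "\<dots> \<le> p * emeasure lborel W"
    using \<open>U1 \<subseteq> W\<close> W(1) by (intro mult_left_mono emeasure_mono) auto
  finally have "q * emeasure lborel U2 \<le> p * emeasure lborel W"
    by simp
  moreover have "negligible (E - U2)"
  proof (rule negligible_subset)
    show "negligible ((E - U1) \<union> (E \<inter> U1 - U2))"
      using C1(4) C2(4) by (simp add: U1_def U2_def)
  qed blast
  ultimately show thesis
    using \<open>U2 \<subseteq> U1\<close> \<open>U1 \<subseteq> W\<close> by (intro that[of U2]) (auto simp: U2_def)
qed

lemma negligible_if_open_approximable:
  fixes E :: "'a::euclidean_space set"
  assumes "\<And>e. 0 < e \<Longrightarrow> \<exists>V. open V \<and> emeasure lborel V < ennreal e \<and> negligible (E - V)"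
  shows "negligible E"
proof -
  obtain V where V: "\<And>n. open (V n)" "\<And>n. emeasure lborel (V n) < ennreal (1 / Suc n)"
    "\<And>n. negligible (E - V n)"
    using assms[of "1 / Suc _"] by (metis of_nat_0_less_iff zero_less_Suc zero_less_divide_1_iff)
  have "emeasure lborel (\<Inter>n. V n) \<le> 0"
  proof (rule tendsto_lowerbound)
    show "(\<lambda>n. ennreal (1 / Suc n)) \<longlonglongrightarrow> 0"
      using tendsto_ennrealI[OF LIMSEQ_inverse_real_of_nat] by (simp add: inverse_eq_divide)
    show "\<forall>\<^sub>F n in sequentially. emeasure lborel (\<Inter>n. V n) \<le> ennreal (1 / Suc n)"
    proof (intro always_eventually allI)
      fix n
      have "emeasure lborel (\<Inter>n. V n) \<le> emeasure lborel (V n)"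
        by (rule emeasure_mono) (auto simp: borel_open V(1))
      then show "emeasure lborel (\<Inter>n. V n) \<le> ennreal (1 / Suc n)"
        using V(2)[of n] by simp
    qed
  qed simp
  then have "negligible (\<Inter>n. V n)"
    using V(1) by (simp add: negligible_iff_null_sets null_sets_completionI null_setsI borel_open)
  moreover have "negligible (\<Union>n. E - V n)"
    by (rule negligible_countable_Union) (auto simp: V(3))
  ultimately show ?thesis
    by (rule negligible_subset[OF negligible_Un]) blast
qed

lemma open_cover_slope_below_above_power:
  fixes \<phi> :: "real \<Rightarrow> real"
  assumes mono: "mono \<phi>" and cont: "continuous_on UNIV \<phi>" and pq: "0 < p" "p < q"
    and W: "open W" "E \<subseteq> W"
    and slopes: "\<And>x. x \<in> E \<Longrightarrow> slope_below \<phi> x p \<and> slope_above \<phi> x q"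
  shows "\<exists>V. open V \<and> emeasure lborel V \<le> ennreal (p / q) ^ k * emeasure lborel W \<and> negligible (E - V)"
proof (induction k)
  case 0
  show ?case
    using W by auto
next
  case (Suc k)
  then obtain V where V: "open V" "emeasure lborel V \<le> ennreal (p / q) ^ k * emeasure lborel W"
    "negligible (E - V)"
    by blast
  obtain V' where V': "open V'" "q * emeasure lborel V' \<le> p * emeasure lborel V"
    "negligible (E \<inter> V - V')"
    by (rule open_subset_shrink_slope_below_above[OF mono cont V(1), of "E \<inter> V"]) (use slopes in auto)
  have "ennreal q * emeasure lborel V' \<le> ennreal q * (ennreal (p / q) * emeasure lborel V)"
    using V'(2) pq by (simp add: mult.assoc[symmetric] ennreal_mult[symmetric])
  then have "emeasure lborel V' \<le> ennreal (p / q) * emeasure lborel V"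
    using pq by (subst (asm) ennreal_mult_le_mult_iff) auto
  also have "\<dots> \<le> ennreal (p / q) ^ Suc k * emeasure lborel W"
    using V(2) by (simp add: mult_left_mono mult.assoc)
  finally show ?case
    using V(3) V'(1,3) by (intro exI[of _ V']) (auto intro: negligible_subset[OF negligible_Un])
qed

lemma negligible_slope_below_above:
  fixes \<phi> :: "real \<Rightarrow> real"
  assumes mono: "mono \<phi>" and cont: "continuous_on UNIV \<phi>" and pq: "0 < p" "p < q"
  shows "negligible {x. slope_below \<phi> x p \<and> slope_above \<phi> x q}"
proof -
  have bounded: "negligible {x \<in> {-real n<..<real n}. slope_below \<phi> x p \<and> slope_above \<phi> x q}"
    for n :: nat
  proof (rule negligible_if_open_approximable)
    fix e :: real
    assume "0 < e"
    obtain k where "(p / q) ^ k < e / (2 * real n + 1)"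
      using real_arch_pow_inv[of "e / (2 * real n + 1)" "p / q"] pq \<open>0 < e\<close> by auto
    then have "(p / q) ^ k * (2 * real n + 1) < e"
      by (simp add: pos_less_divide_eq)
    moreover have "(p / q) ^ k * (2 * real n) \<le> (p / q) ^ k * (2 * real n + 1)"
      using pq by (intro mult_left_mono) auto
    ultimately have "ennreal ((p / q) ^ k * (2 * real n)) < ennreal e"
      using \<open>0 < e\<close> by (intro ennreal_lessI) auto
    moreover have "ennreal (p / q) ^ k * emeasure lborel {-real n<..<real n}
        = ennreal ((p / q) ^ k * (2 * real n))"
      using pq by (simp add: emeasure_lborel_Ioo ennreal_mult'' ennreal_power)
    ultimately have "ennreal (p / q) ^ k * emeasure lborel {-real n<..<real n} < ennreal e"
      by simp
    moreover have "\<exists>V. open V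
        \<and> emeasure lborel V \<le> ennreal (p / q) ^ k * emeasure lborel {-real n<..<real n}
        \<and> negligible ({x \<in> {-real n<..<real n}. slope_below \<phi> x p \<and> slope_above \<phi> x q} - V)"
      by (rule open_cover_slope_below_above_power[OF mono cont pq open_greaterThanLessThan]) auto
    ultimately show "\<exists>V. open V \<and> emeasure lborel V < ennreal e \<and>
        negligible ({x \<in> {-real n<..<real n}. slope_below \<phi> x p \<and> slope_above \<phi> x q} - V)"
      using le_less_trans by blast
  qed
  have cover: "x \<in> (\<Union>n::nat. {-real n<..<real n})" for x :: real
  proof -
    obtain n :: nat where "\<bar>x\<bar> < n"
      using reals_Archimedean2 by blast
    then show ?thesis
      by (intro UN_I[of n]) (auto simp: abs_less_iff)
  qed
  have "negligible (\<Union>n. {x \<in> {-real n<..<real n}. slope_below \<phi> x p \<and> slope_above \<phi> x q})"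
    using bounded by (intro negligible_countable_Union) auto
  then show ?thesis
    by (rule negligible_subset) (use cover in blast)
qed

lemma increment_bound_at_endpoints:
  fixes \<phi> :: "real \<Rightarrow> real"
  assumes cont: "continuous_on UNIV \<phi>"
    and bound: "\<And>c d. c < x \<Longrightarrow> x < d \<Longrightarrow> d - c < \<delta> \<Longrightarrow> \<bar>\<phi> d - \<phi> c - D * (d - c)\<bar> \<le> \<epsilon> * (d - c)"
    and cd: "c \<le> x" "x \<le> d" "d - c < \<delta>"
  shows "\<bar>\<phi> d - \<phi> c - D * (d - c)\<bar> \<le> \<epsilon> * (d - c)"
proof -
  let ?g = "\<lambda>\<eta>. \<bar>\<phi> (d + \<eta>) - \<phi> (c - \<eta>) - D * (d - c + 2 * \<eta>)\<bar> - \<epsilon> * (d - c + 2 * \<eta>)"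
  have "\<bar>\<phi> d - \<phi> c - D * (d - c)\<bar> - \<epsilon> * (d - c) \<le> 0"
  proof (rule tendsto_upperbound)
    have "((\<lambda>\<eta>. \<phi> (d + \<eta>)) \<longlongrightarrow> \<phi> (d + 0)) (at_right 0)" "((\<lambda>\<eta>. \<phi> (c - \<eta>)) \<longlongrightarrow> \<phi> (c - 0)) (at_right 0)"
      by (auto intro!: continuous_on_tendsto_compose[OF cont] tendsto_eq_intros)
    then show "(?g \<longlongrightarrow> \<bar>\<phi> d - \<phi> c - D * (d - c)\<bar> - \<epsilon> * (d - c)) (at_right 0)"
      by (auto intro!: tendsto_eq_intros)
    show "\<forall>\<^sub>F \<eta> in at_right 0. ?g \<eta> \<le> 0"
      unfolding eventually_at_right_field
    proof (intro exI conjI allI impI)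
      show "0 < (\<delta> - (d - c)) / 2"
        using cd by simp
      fix \<eta> :: real
      assume "0 < \<eta>" "\<eta> < (\<delta> - (d - c)) / 2"
      then have "\<bar>\<phi> (d + \<eta>) - \<phi> (c - \<eta>) - D * ((d + \<eta>) - (c - \<eta>))\<bar> \<le> \<epsilon> * ((d + \<eta>) - (c - \<eta>))"
        using cd by (intro bound) auto
      then show "?g \<eta> \<le> 0"
        by (simp add: algebra_simps)
    qed
  qed simp
  then show ?thesis
    by simp
qed

lemma has_real_derivative_if_slopes_converge:
  fixes \<phi> :: "real \<Rightarrow> real"
  assumes cont: "continuous_on UNIV \<phi>"
    and slopes: "\<And>\<epsilon>. 0 < \<epsilon> \<Longrightarrow> \<exists>\<delta>>0. \<forall>c d. c < x \<longrightarrow> x < d \<longrightarrow> d - c < \<delta> \<longrightarrow>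
                   \<bar>\<phi> d - \<phi> c - D * (d - c)\<bar> \<le> \<epsilon> * (d - c)"
  shows "(\<phi> has_real_derivative D) (at x)"
  unfolding has_field_derivative_iff tendsto_iff eventually_at
proof (intro allI impI)
  fix r :: real
  assume "0 < r"
  then obtain \<delta> where "0 < \<delta>" and \<delta>: "\<And>c d. c < x \<Longrightarrow> x < d \<Longrightarrow> d - c < \<delta> \<Longrightarrow>
      \<bar>\<phi> d - \<phi> c - D * (d - c)\<bar> \<le> r / 2 * (d - c)"
    using slopes[of "r / 2"] by auto
  have "dist ((\<phi> y - \<phi> x) / (y - x)) D < r" if "y \<noteq> x" "dist y x < \<delta>" for y
  proof -
    have "\<bar>\<phi> y - \<phi> x - D * (y - x)\<bar> \<le> r / 2 * \<bar>y - x\<bar>"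
    proof (cases "x \<le> y")
      case True
      then show ?thesis
        using increment_bound_at_endpoints[OF cont \<delta>, where c = x and d = y] that
        by (simp add: dist_real_def)
    next
      case False
      have "\<bar>\<phi> y - \<phi> x - D * (y - x)\<bar> = \<bar>\<phi> x - \<phi> y - D * (x - y)\<bar>"
        by (simp add: abs_minus_commute algebra_simps)
      then show ?thesis
        using False increment_bound_at_endpoints[OF cont \<delta>, where c = y and d = x] that
        by (simp add: dist_real_def)
    qed
    then have "\<bar>(\<phi> y - \<phi> x) / (y - x) - D\<bar> \<le> r / 2"
      using that(1) by (simp add: divide_simps abs_divide algebra_simps)
    then show ?thesis
      using \<open>0 < r\<close> by (simp add: dist_real_def)
  qed
  then show "\<exists>\<delta>>0. \<forall>y\<in>UNIV. y \<noteq> x \<and> dist y x < \<delta> \<longrightarrow> dist ((\<phi> y - \<phi> x) / (y - x)) D < r"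
    using \<open>0 < \<delta>\<close> by blast
qed

lemma slope_above_mono:
  "slope_above \<phi> x q \<Longrightarrow> q' \<le> q \<Longrightarrow> slope_above \<phi> x q'"
  unfolding slope_above_def
  by (meson le_less_trans mult_right_mono diff_ge_0_iff_ge less_trans less_imp_le)

lemma slope_above_less_lipschitz:
  assumes "L-lipschitz_on UNIV \<phi>" "slope_above \<phi> x q"
  shows "q < L"
proof -
  obtain c d where "c < x" "x < d" "q * (d - c) < \<phi> d - \<phi> c"
    using assms(2) unfolding slope_above_def by (auto dest!: spec[of _ 1])
  moreover have "\<phi> d - \<phi> c \<le> L * (d - c)"
    using lipschitz_onD[OF assms(1), of d c] \<open>c < x\<close> \<open>x < d\<close> by (simp add: dist_real_def)
  ultimately have "q * (d - c) < L * (d - c)"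
    by linarith
  then show ?thesis
    using \<open>c < x\<close> \<open>x < d\<close> by (simp add: mult_less_cancel_right)
qed

lemma slope_above_if_mono:
  assumes "mono \<phi>" "q < 0"
  shows "slope_above \<phi> x q"
  unfolding slope_above_def
proof (intro allI impI)
  fix \<delta> :: real
  assume "0 < \<delta>"
  have "q * (\<delta> / 2) < \<phi> (x + \<delta> / 4) - \<phi> (x - \<delta> / 4)"
    using monoD[OF assms(1), of "x - \<delta> / 4" "x + \<delta> / 4"] mult_neg_pos[OF assms(2), of "\<delta> / 2"] \<open>0 < \<delta>\<close>
    by simp
  then show "\<exists>c d. c < x \<and> x < d \<and> d - c < \<delta> \<and> q * (d - c) < \<phi> d - \<phi> c"
    using \<open>0 < \<delta>\<close> by (intro exI[of _ "x - \<delta> / 4"] exI[of _ "x + \<delta> / 4"]) auto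
qed

lemma not_slope_below_if_mono:
  assumes "mono \<phi>" "p \<le> 0"
  shows "\<not> slope_below \<phi> x p"
proof
  assume "slope_below \<phi> x p"
  then obtain c d where "c < x" "x < d" "\<phi> d - \<phi> c < p * (d - c)"
    unfolding slope_below_def by (auto dest!: spec[of _ 1])
  moreover have "\<phi> c \<le> \<phi> d" "p * (d - c) \<le> 0"
    using monoD[OF assms(1), of c d] \<open>c < x\<close> \<open>x < d\<close> assms(2) by (auto simp: mult_nonpos_nonneg)
  ultimately show False
    by linarith
qed

text \<open>The derivative is the supremum of the upper slopes; the rationals separate it from any
  smaller lower slope.\<close>
lemma differentiable_if_no_slope_gap:
  fixes \<phi> :: "real \<Rightarrow> real"
  assumes mono: "mono \<phi>" and lip: "L-lipschitz_on UNIV \<phi>"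
    and no_gap: "\<And>p q. p \<in> \<rat> \<Longrightarrow> q \<in> \<rat> \<Longrightarrow> 0 < p \<Longrightarrow> p < q \<Longrightarrow>
                   \<not> (slope_below \<phi> x p \<and> slope_above \<phi> x q)"
  shows "\<phi> differentiable (at x)"
proof -
  define H where "H = {q. slope_above \<phi> x q}"
  define D where "D = Sup H"
  have "-1 \<in> H"
    using slope_above_if_mono[OF mono] by (simp add: H_def)
  have bdd: "bdd_above H"
    using slope_above_less_lipschitz[OF lip] by (auto simp: H_def bdd_above_def intro: less_imp_le)
  have "\<exists>\<delta>>0. \<forall>c d. c < x \<longrightarrow> x < d \<longrightarrow> d - c < \<delta> \<longrightarrow>
          \<bar>\<phi> d - \<phi> c - D * (d - c)\<bar> \<le> \<epsilon> * (d - c)" if "0 < \<epsilon>" for \<epsilon>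
  proof -
    have "\<not> slope_above \<phi> x (D + \<epsilon>)"
      using cSup_upper[OF _ bdd, of "D + \<epsilon>"] \<open>0 < \<epsilon>\<close> by (auto simp: D_def H_def)
    then obtain \<delta>1 where "0 < \<delta>1" and upper: "\<And>c d. c < x \<Longrightarrow> x < d \<Longrightarrow> d - c < \<delta>1 \<Longrightarrow>
        \<phi> d - \<phi> c \<le> (D + \<epsilon>) * (d - c)"
      unfolding slope_above_def by (auto simp: not_less) (metis not_le)
    obtain p where p: "p \<in> \<rat>" "D - \<epsilon> < p" "p < D"
      using Rats_dense_in_real[of "D - \<epsilon>" D] \<open>0 < \<epsilon>\<close> by auto
    obtain q where q: "q \<in> \<rat>" "p < q" "q < D"
      using Rats_dense_in_real[of p D] p(3) by auto
    obtain q' where "q' \<in> H" "q < q'"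
      using less_cSup_iff[OF _ bdd, of q] \<open>-1 \<in> H\<close> q(3) by (auto simp: D_def)
    then have "slope_above \<phi> x q"
      using slope_above_mono by (auto simp: H_def)
    then have "\<not> slope_below \<phi> x p"
      using no_gap[OF p(1) q(1) _ q(2)] not_slope_below_if_mono[OF mono] by force
    then obtain \<delta>2 where "0 < \<delta>2" and lower: "\<And>c d. c < x \<Longrightarrow> x < d \<Longrightarrow> d - c < \<delta>2 \<Longrightarrow>
        p * (d - c) \<le> \<phi> d - \<phi> c"
      unfolding slope_below_def by (auto simp: not_less) (metis not_le)
    show ?thesis
    proof (intro exI[of _ "min \<delta>1 \<delta>2"] conjI allI impI)
      fix c d
      assume cd: "c < x" "x < d" "d - c < min \<delta>1 \<delta>2"
      have "(D - \<epsilon>) * (d - c) \<le> p * (d - c)"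
        using p(2) cd by (intro mult_right_mono) auto
      moreover have "p * (d - c) \<le> \<phi> d - \<phi> c" "\<phi> d - \<phi> c \<le> (D + \<epsilon>) * (d - c)"
        using upper[of c d] lower[of c d] cd by auto
      ultimately have "(D - \<epsilon>) * (d - c) \<le> \<phi> d - \<phi> c" "\<phi> d - \<phi> c \<le> (D + \<epsilon>) * (d - c)"
        by linarith+
      then show "\<bar>\<phi> d - \<phi> c - D * (d - c)\<bar> \<le> \<epsilon> * (d - c)"
        by (simp add: abs_le_iff algebra_simps)
    qed (use \<open>0 < \<delta>1\<close> \<open>0 < \<delta>2\<close> in auto)
  qed
  then have "(\<phi> has_real_derivative D) (at x)"
    by (intro has_real_derivative_if_slopes_converge[OF lipschitz_on_continuous_on[OF lip]]) auto
  then show ?thesis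
    by (auto simp: real_differentiable_def)
qed

lemma negligible_nondifferentiable_mono_lipschitz:
  fixes \<phi> :: "real \<Rightarrow> real"
  assumes "mono \<phi>" "L-lipschitz_on UNIV \<phi>"
  shows "negligible {x. \<not> \<phi> differentiable (at x)}"
proof -
  let ?E = "\<lambda>(p, q). {x. slope_below \<phi> x p \<and> slope_above \<phi> x q}"
  let ?P = "{(p, q). p \<in> \<rat> \<and> q \<in> \<rat> \<and> 0 < p \<and> p < q}"
  have "countable ?P"
    by (rule countable_subset[of _ "\<rat> \<times> \<rat>"]) (auto simp: countable_rat)
  then have "negligible (\<Union>(?E ` ?P))"
    using negligible_slope_below_above[OF assms(1) lipschitz_on_continuous_on[OF assms(2)]]
    by (intro negligible_countable_Union) auto
  moreover have "{x. \<not> \<phi> differentiable (at x)} \<subseteq> \<Union>(?E ` ?P)"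
    using differentiable_if_no_slope_gap[OF assms] by fast
  ultimately show ?thesis
    by (rule negligible_subset)
qed

lemma negligible_nondifferentiable_lipschitz_real:
  fixes \<phi> :: "real \<Rightarrow> real"
  assumes lip: "L-lipschitz_on UNIV \<phi>"
  shows "negligible {x. \<not> \<phi> differentiable (at x)}"
proof -
  let ?\<psi> = "\<lambda>x. \<phi> x + L * x"
  have "mono ?\<psi>"
  proof (rule monoI)
    fix x y :: real
    assume "x \<le> y"
    then show "?\<psi> x \<le> ?\<psi> y"
      using lipschitz_onD[OF lip, of x y] by (simp add: dist_real_def abs_le_iff algebra_simps)
  qed
  moreover have "(L + \<bar>L\<bar> * 1)-lipschitz_on UNIV ?\<psi>"
    by (intro lipschitz_on_add lipschitz_on_cmult_real lipschitz_on_id lip)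
  ultimately have "negligible {x. \<not> ?\<psi> differentiable (at x)}"
    by (rule negligible_nondifferentiable_mono_lipschitz)
  moreover have "\<phi> differentiable (at x)" if "?\<psi> differentiable (at x)" for x
    using differentiable_diff[OF that, of "\<lambda>x. L * x"] by simp
  then have "{x. \<not> \<phi> differentiable (at x)} \<subseteq> {x. \<not> ?\<psi> differentiable (at x)}"
    by blast
  ultimately show ?thesis
    by (rule negligible_subset)
qed

lemma negligible_nondifferentiable_lipschitz:
  fixes F :: "real \<Rightarrow> 'a::euclidean_space"
  assumes lip: "L-lipschitz_on UNIV F"
  shows "negligible {t. \<not> F differentiable (at t)}"
proof -
  have "negligible {t. \<not> (\<lambda>t. F t \<bullet> i) differentiable (at t)}" if "i \<in> Basis" for i
  proof (rule negligible_nondifferentiable_lipschitz_real)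
    show "L-lipschitz_on UNIV (\<lambda>t. F t \<bullet> i)"
    proof (rule lipschitz_onI)
      fix x y
      have "dist (F x \<bullet> i) (F y \<bullet> i) \<le> dist (F x) (F y)"
        using Basis_le_norm[OF that, of "F x - F y"] by (simp add: dist_norm inner_diff_left)
      then show "dist (F x \<bullet> i) (F y \<bullet> i) \<le> L * dist x y"
        using lipschitz_onD[OF lip] by (meson UNIV_I order_trans)
    qed (use lipschitz_on_nonneg[OF lip] in simp)
  qed
  then have "negligible (\<Union>i\<in>Basis. {t. \<not> (\<lambda>t. F t \<bullet> i) differentiable (at t)})"
    by (intro negligible_Union) auto
  moreover have "{t. \<not> F differentiable (at t)} \<subseteq> (\<Union>i\<in>Basis. {t. \<not> (\<lambda>t. F t \<bullet> i) differentiable (at t)})"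
    using differentiable_componentwise_within[of F _ UNIV] by blast
  ultimately show ?thesis
    by (rule negligible_subset)
qed

section \<open>Limits of functions whose slopes lie in a convex set\<close>

lemma has_vector_derivative_imp_tendsto_quotient:
  assumes "(f has_vector_derivative f') (at x)"
  shows "((\<lambda>h. (f (x + h) - f x) /\<^sub>R h) \<longlongrightarrow> f') (at 0)"
proof -
  have "((\<lambda>h. norm (f (x + h) - f x - h *\<^sub>R f') / norm h) \<longlongrightarrow> 0) (at 0)"
    using assms by (simp add: has_vector_derivative_def has_derivative_at)
  moreover have "\<forall>\<^sub>F h in at 0.
      norm (f (x + h) - f x - h *\<^sub>R f') / norm h = norm ((f (x + h) - f x) /\<^sub>R h - f')"
    unfolding eventually_at_filter
  proof (intro always_eventually allI impI)
    fix h :: real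
    assume "h \<noteq> 0"
    then have "f (x + h) - f x - h *\<^sub>R f' = h *\<^sub>R ((f (x + h) - f x) /\<^sub>R h - f')"
      by (simp add: scaleR_diff_right)
    then show "norm (f (x + h) - f x - h *\<^sub>R f') / norm h = norm ((f (x + h) - f x) /\<^sub>R h - f')"
      using \<open>h \<noteq> 0\<close> by simp
  qed
  ultimately show ?thesis
    by (simp add: tendsto_cong tendsto_norm_zero_iff LIM_zero_iff)
qed

lemma increment_ge_if_derivative_ge:
  fixes \<phi> :: "real \<Rightarrow> real"
  assumes "a \<le> b" "finite F" "continuous_on {a..b} \<phi>"
    and "\<And>s. s \<in> {a<..<b} - F \<Longrightarrow> \<exists>d \<ge> \<beta>. (\<phi> has_real_derivative d) (at s)"
  shows "\<beta> * (b - a) \<le> \<phi> b - \<phi> a"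
proof -
  obtain \<phi>' where \<phi>': "\<And>s. s \<in> {a<..<b} - F \<Longrightarrow> \<beta> \<le> \<phi>' s \<and> (\<phi> has_real_derivative \<phi>' s) (at s)"
    using assms(4) by metis
  define \<psi> where "\<psi> s = (if s \<in> {a<..<b} - F then \<phi>' s else \<beta>)" for s
  have "((\<lambda>_. \<beta>) has_integral (\<beta> * (b - a))) {a..b}"
    using has_integral_const_real[of \<beta> a b] assms(1) by (simp add: mult.commute)
  moreover have "(\<psi> has_integral (\<phi> b - \<phi> a)) {a..b}"
  proof (rule fundamental_theorem_of_calculus_strong[of "F \<union> {a, b}"])
    fix s
    assume "s \<in> {a..b} - (F \<union> {a, b})"
    then show "(\<phi> has_vector_derivative \<psi> s) (at s)"
      using \<phi>'[of s] by (simp add: \<psi>_def has_real_derivative_iff_has_vector_derivative)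
  qed (use assms in auto)
  ultimately show ?thesis
    by (rule has_integral_le) (use \<phi>' in \<open>auto simp: \<psi>_def\<close>)
qed

lemma difference_quotient_in_closed_convex:
  fixes f :: "real \<Rightarrow> 'a::euclidean_space"
  assumes "a < b" "finite F" "continuous_on {a..b} f" "convex K" "closed K"
    and derivative: "\<And>s. s \<in> {a<..<b} - F \<Longrightarrow> \<exists>d\<in>K. (f has_vector_derivative d) (at s)"
  shows "(f b - f a) /\<^sub>R (b - a) \<in> K"
proof (rule ccontr)
  assume "(f b - f a) /\<^sub>R (b - a) \<notin> K"
  then obtain c \<beta> where c: "c \<bullet> ((f b - f a) /\<^sub>R (b - a)) < \<beta>" and K: "\<And>x. x \<in> K \<Longrightarrow> \<beta> < c \<bullet> x"
    using separating_hyperplane_closed_point[OF assms(4,5)] by blast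
  have "\<beta> * (b - a) \<le> c \<bullet> f b - c \<bullet> f a"
  proof (rule increment_ge_if_derivative_ge[where \<phi> = "\<lambda>s. c \<bullet> f s"])
    fix s
    assume "s \<in> {a<..<b} - F"
    then obtain d where "d \<in> K" "(f has_vector_derivative d) (at s)"
      using derivative by blast
    then show "\<exists>d \<ge> \<beta>. ((\<lambda>s. c \<bullet> f s) has_real_derivative d) (at s)"
      using K[of d] bounded_linear.has_vector_derivative[OF bounded_linear_inner_right]
      by (auto simp: has_real_derivative_iff_has_vector_derivative intro!: exI[of _ "c \<bullet> d"] less_imp_le)
  qed (use assms in \<open>auto intro: continuous_intros\<close>)
  moreover have "c \<bullet> ((f b - f a) /\<^sub>R (b - a)) = (c \<bullet> f b - c \<bullet> f a) / (b - a)"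
    by (simp add: inner_diff_right divide_inverse mult.commute)
  ultimately show False
    using c \<open>a < b\<close> by (simp add: pos_divide_less_eq)
qed

text \<open>If, near \<open>t\<close>, the slopes of the approximations eventually lie in \<open>K\<close>, then so do their
  right difference quotients at \<open>t\<close>, hence those of the limit, hence its derivative.\<close>
lemma has_vector_derivative_in_closed_convex_of_limit:
  fixes x :: "nat \<Rightarrow> real \<Rightarrow> 'a::euclidean_space"
  assumes K: "closed K" "convex K" and "0 < \<eta>"
    and lim: "\<And>s. s \<in> {t..t + \<eta>} \<Longrightarrow> (\<lambda>n. x n s) \<longlonglongrightarrow> y s"
    and approx: "\<forall>\<^sub>F n in sequentially. continuous_on {t..t + \<eta>} (x n) \<and>
       (\<exists>F. finite F \<and> (\<forall>s\<in>{t<..<t + \<eta>} - F. \<exists>d\<in>K. (x n has_vector_derivative d) (at s)))"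
    and y': "(y has_vector_derivative w) (at t)"
  shows "w \<in> K"
proof -
  have quotient: "(y (t + h) - y t) /\<^sub>R h \<in> K" if h: "0 < h" "h \<le> \<eta>" for h
  proof (rule Lim_in_closed_set[OF K(1)])
    show "((\<lambda>n. (x n (t + h) - x n t) /\<^sub>R h) \<longlongrightarrow> (y (t + h) - y t) /\<^sub>R h) sequentially"
      using h by (intro tendsto_intros lim) auto
    show "\<forall>\<^sub>F n in sequentially. (x n (t + h) - x n t) /\<^sub>R h \<in> K"
      using approx
    proof eventually_elim
      case (elim n)
      then obtain F where "finite F" "continuous_on {t..t + \<eta>} (x n)"
        "\<And>s. s \<in> {t<..<t + \<eta>} - F \<Longrightarrow> \<exists>d\<in>K. (x n has_vector_derivative d) (at s)"
        by blast
      moreover have "continuous_on {t..t + h} (x n)"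
        using h by (intro continuous_on_subset[OF \<open>continuous_on {t..t + \<eta>} (x n)\<close>]) auto
      ultimately show ?case
        using difference_quotient_in_closed_convex[of t "t + h" F "x n" K] h K by auto
    qed
  qed simp
  show ?thesis
  proof (rule Lim_in_closed_set[OF K(1)])
    show "((\<lambda>h. (y (t + h) - y t) /\<^sub>R h) \<longlongrightarrow> w) (at_right 0)"
      using has_vector_derivative_imp_tendsto_quotient[OF y'] by (rule tendsto_within_subset) simp
    show "\<forall>\<^sub>F h in at_right 0. (y (t + h) - y t) /\<^sub>R h \<in> K"
      unfolding eventually_at_right_field using \<open>0 < \<eta>\<close> quotient by (intro exI[of _ \<eta>]) auto
  qed simp
qed

lemma lipschitz_on_limit:
  assumes "\<And>n. L-lipschitz_on S (f n)" "\<And>s. s \<in> S \<Longrightarrow> (\<lambda>n. f n s) \<longlonglongrightarrow> g s"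
  shows "L-lipschitz_on S g"
proof (rule lipschitz_onI)
  fix s s'
  assume "s \<in> S" "s' \<in> S"
  show "dist (g s) (g s') \<le> L * dist s s'"
  proof (rule tendsto_upperbound)
    show "(\<lambda>n. dist (f n s) (f n s')) \<longlonglongrightarrow> dist (g s) (g s')"
      using assms(2) \<open>s \<in> S\<close> \<open>s' \<in> S\<close> by (intro tendsto_dist)
    show "\<forall>\<^sub>F n in sequentially. dist (f n s) (f n s') \<le> L * dist s s'"
      using lipschitz_onD[OF assms(1) \<open>s \<in> S\<close> \<open>s' \<in> S\<close>] by simp
  qed simp
qed (use assms(1)[of 0] lipschitz_on_nonneg in blast)

lemma Arzela_Ascoli_lipschitz:
  fixes f :: "nat \<Rightarrow> real \<Rightarrow> 'a::{real_normed_vector,heine_borel}"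
  assumes lip: "\<And>n. L-lipschitz_on {a..b} (f n)" and bound: "\<And>n. norm (f n a) \<le> B"
  obtains g r where "strict_mono (r :: nat \<Rightarrow> nat)"
    "\<And>s. s \<in> {a..b} \<Longrightarrow> (\<lambda>n. f (r n) s) \<longlonglongrightarrow> g s"
proof -
  have L: "0 \<le> L"
    using lip lipschitz_on_nonneg by blast
  obtain g r where "strict_mono (r :: nat \<Rightarrow> nat)"
    and unif: "\<And>e. 0 < e \<Longrightarrow> \<exists>N. \<forall>n s. n \<ge> N \<and> s \<in> {a..b} \<longrightarrow> norm (f (r n) s - g s) < e"
  proof (rule Arzela_Ascoli[of "{a..b}" f "B + L * (b - a)"])
    fix n s
    assume "s \<in> {a..b}"
    then have "norm (f n s - f n a) \<le> L * (b - a)"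
      using lipschitz_on_normD[OF lip, of s a n] mult_left_mono[OF _ L, of "s - a" "b - a"]
      by (auto simp: dist_real_def)
    then show "norm (f n s) \<le> B + L * (b - a)"
      using bound[of n] norm_triangle_sub[of "f n s" "f n a"] by linarith
  next
    fix s and e :: real
    assume "s \<in> {a..b}" "0 < e"
    show "\<exists>d>0. \<forall>n s'. s' \<in> {a..b} \<and> norm (s - s') < d \<longrightarrow> norm (f n s - f n s') < e"
    proof (intro exI conjI allI impI)
      fix n s'
      assume s': "s' \<in> {a..b} \<and> norm (s - s') < e / (L + 1)"
      have "norm (f n s - f n s') \<le> L * norm (s - s')"
        using lipschitz_on_normD[OF lip \<open>s \<in> {a..b}\<close>, of s' n] s' by simp
      also have "\<dots> \<le> (L + 1) * norm (s - s')"
        by (simp add: distrib_right)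
      also have "\<dots> < e"
        using s' L by (simp add: pos_less_divide_eq mult.commute)
      finally show "norm (f n s - f n s') < e" .
    qed (use \<open>0 < e\<close> L in simp)
  qed auto
  moreover have "(\<lambda>n. f (r n) s) \<longlonglongrightarrow> g s" if "s \<in> {a..b}" for s
    unfolding LIMSEQ_iff using unif that by (meson le_less_trans order.refl)
  ultimately show thesis
    using that by blast
qed

lemma lipschitz_on_clamp:
  fixes f :: "real \<Rightarrow> 'a::metric_space"
  assumes "L-lipschitz_on {a..b} f" "a \<le> b"
  shows "L-lipschitz_on UNIV (\<lambda>t. f (clamp a b t))"
proof (rule lipschitz_onI)
  fix s t :: real
  have "clamp a b s \<in> {a..b}" "clamp a b t \<in> {a..b}"
    using clamp_in_interval[of a b] assms(2) by auto
  then have "dist (f (clamp a b s)) (f (clamp a b t)) \<le> L * dist (clamp a b s) (clamp a b t)"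
    by (intro lipschitz_onD[OF assms(1)])
  also have "\<dots> \<le> L * dist s t"
    using dist_clamps_le_dist_args lipschitz_on_nonneg[OF assms(1)] by (rule mult_left_mono)
  finally show "dist (f (clamp a b s)) (f (clamp a b t)) \<le> L * dist s t" .
qed (use lipschitz_on_nonneg[OF assms(1)] in simp)

section \<open>Approximate minimisers and upper semicontinuity of \<open>G\<close>\<close>

text \<open>Unlike the minimisers themselves, the thickened \<open>\<epsilon>\<close>-minimisers are stable under small
  perturbations of the set and of the functional.\<close>
definition approx_argmin :: "'a::real_normed_vector set \<Rightarrow> ('a \<Rightarrow> real) \<Rightarrow> real \<Rightarrow> 'a set" where
  "approx_argmin S \<phi> \<epsilon> = {g \<in> S. \<forall>h\<in>S. \<phi> g \<le> \<phi> h + \<epsilon>} + cball 0 \<epsilon>"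

lemma approx_argmin_iff:
  "x \<in> approx_argmin S \<phi> \<epsilon> \<longleftrightarrow> (\<exists>g\<in>S. (\<forall>h\<in>S. \<phi> g \<le> \<phi> h + \<epsilon>) \<and> norm (x - g) \<le> \<epsilon>)"
  unfolding approx_argmin_def set_plus_def mem_Collect_eq
proof safe
  fix g
  assume "g \<in> S" "\<forall>h\<in>S. \<phi> g \<le> \<phi> h + \<epsilon>" "norm (x - g) \<le> \<epsilon>"
  then show "\<exists>g\<in>{g \<in> S. \<forall>h\<in>S. \<phi> g \<le> \<phi> h + \<epsilon>}. \<exists>e\<in>cball 0 \<epsilon>. x = g + e"
    by (intro bexI[of _ g] bexI[of _ "x - g"]) auto
qed auto

lemma approx_argmin_mono: "\<epsilon> \<le> \<epsilon>' \<Longrightarrow> approx_argmin S \<phi> \<epsilon> \<subseteq> approx_argmin S \<phi> \<epsilon>'"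
  unfolding subset_iff approx_argmin_iff by (meson add_left_mono order_trans)

lemma approx_argmin_add:
  assumes "x \<in> approx_argmin S \<phi> \<epsilon>" "norm e \<le> \<epsilon>'" "0 \<le> \<epsilon>'"
  shows "x + e \<in> approx_argmin S \<phi> (\<epsilon> + \<epsilon>')"
proof -
  obtain g where "g \<in> S" "\<forall>h\<in>S. \<phi> g \<le> \<phi> h + \<epsilon>" "norm (x - g) \<le> \<epsilon>"
    using assms(1) by (auto simp: approx_argmin_iff)
  moreover have "norm (x + e - g) \<le> norm (x - g) + norm e"
    by (metis add.commute add_diff_eq norm_triangle_ineq)
  ultimately show ?thesis
    using assms(2,3) unfolding approx_argmin_iff by (intro bexI[of _ g]) force+
qed

lemma compact_approx_argmin:
  fixes S :: "'a::euclidean_space set"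
  assumes "compact S" "continuous_on UNIV \<phi>"
  shows "compact (approx_argmin S \<phi> \<epsilon>)"
proof -
  have "closed {g. \<phi> g \<le> \<phi> h + \<epsilon>}" for h
    using assms(2) by (intro closed_Collect_le) (auto intro: continuous_intros)
  moreover have "{g \<in> S. \<forall>h\<in>S. \<phi> g \<le> \<phi> h + \<epsilon>} = S \<inter> (\<Inter>h\<in>S. {g. \<phi> g \<le> \<phi> h + \<epsilon>})"
    by blast
  ultimately have "compact {g \<in> S. \<forall>h\<in>S. \<phi> g \<le> \<phi> h + \<epsilon>}"
    using assms(1) by (simp add: compact_Int_closed closed_INT)
  then have "compact ({g \<in> S. \<forall>h\<in>S. \<phi> g \<le> \<phi> h + \<epsilon>} \<times> cball (0::'a) \<epsilon>)"
    by (simp add: compact_Times)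
  then show ?thesis
    unfolding approx_argmin_def set_plus_image
    by (rule compact_continuous_image[rotated]) (simp add: case_prod_unfold continuous_intros)
qed

lemma convex_approx_argmin:
  assumes "convex S"
  shows "convex (approx_argmin S (\<lambda>g. g \<bullet> d) \<epsilon>)"
proof -
  have "{g \<in> S. \<forall>h\<in>S. g \<bullet> d \<le> h \<bullet> d + \<epsilon>} = S \<inter> (\<Inter>h\<in>S. {g. d \<bullet> g \<le> h \<bullet> d + \<epsilon>})"
    by (auto simp: inner_commute)
  moreover have "convex (S \<inter> (\<Inter>h\<in>S. {g. d \<bullet> g \<le> h \<bullet> d + \<epsilon>}))"
    using assms by (intro convex_Int convex_INT convex_halfspace_le)
  ultimately show ?thesis
    unfolding approx_argmin_def by (simp add: convex_set_plus)
qed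

lemma argmin_if_approx_argmin:
  assumes "closed S" "continuous_on UNIV \<phi>" "\<And>\<epsilon>. 0 < \<epsilon> \<Longrightarrow> x \<in> approx_argmin S \<phi> \<epsilon>"
  shows "x \<in> argmin_set S \<phi>"
proof -
  obtain g where g: "\<And>\<epsilon>. 0 < \<epsilon> \<Longrightarrow> g \<epsilon> \<in> S \<and> (\<forall>h\<in>S. \<phi> (g \<epsilon>) \<le> \<phi> h + \<epsilon>) \<and> norm (x - g \<epsilon>) \<le> \<epsilon>"
    using assms(3) unfolding approx_argmin_iff by metis
  have pos: "\<forall>\<^sub>F \<epsilon> in at_right 0. 0 < (\<epsilon>::real)"
    by (simp add: eventually_at_right_less)
  have "((\<lambda>\<epsilon>. dist (g \<epsilon>) x) \<longlongrightarrow> 0) (at_right 0)"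
  proof (rule tendsto_sandwich[of "\<lambda>_. 0" _ _ "\<lambda>\<epsilon>. \<epsilon>"])
    show "\<forall>\<^sub>F \<epsilon> in at_right 0. dist (g \<epsilon>) x \<le> \<epsilon>"
      using pos by eventually_elim (use g in \<open>auto simp: dist_norm norm_minus_commute\<close>)
  qed (auto intro: tendsto_ident_at)
  then have gx: "(g \<longlongrightarrow> x) (at_right 0)"
    by (rule tendsto_dist_iff[THEN iffD2])
  have "x \<in> S"
  proof (rule Lim_in_closed_set[OF assms(1) _ _ gx])
    show "\<forall>\<^sub>F \<epsilon> in at_right 0. g \<epsilon> \<in> S"
      using pos by eventually_elim (use g in blast)
  qed simp
  moreover have "\<phi> x \<le> \<phi> h" if "h \<in> S" for h
  proof (rule tendsto_le[of "at_right 0"])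
    show "((\<lambda>\<epsilon>. \<phi> h + \<epsilon>) \<longlongrightarrow> \<phi> h) (at_right 0)"
      by (auto intro!: tendsto_eq_intros tendsto_ident_at)
    show "((\<lambda>\<epsilon>. \<phi> (g \<epsilon>)) \<longlongrightarrow> \<phi> x) (at_right 0)"
      using assms(2) gx by (rule continuous_on_tendsto_compose) auto
    show "\<forall>\<^sub>F \<epsilon> in at_right 0. \<phi> (g \<epsilon>) \<le> \<phi> h + \<epsilon>"
      using pos by eventually_elim (use g that in auto)
  qed simp
  ultimately show ?thesis
    by (simp add: argmin_set_def)
qed

lemma argmin_subset_approx_argmin:
  fixes S S' :: "'a::real_inner set"
  assumes "S' \<subseteq> S + cball 0 \<delta>" "S \<subseteq> S' + cball 0 \<delta>" "S' \<subseteq> cball 0 R"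
  shows "argmin_set S' (\<lambda>g. g \<bullet> d')
    \<subseteq> approx_argmin S (\<lambda>g. g \<bullet> d) (\<delta> + 2 * \<delta> * norm d + 2 * R * norm (d' - d))"
proof
  fix g'
  assume "g' \<in> argmin_set S' (\<lambda>g. g \<bullet> d')"
  then have "g' \<in> S'" and g'_min: "\<And>h'. h' \<in> S' \<Longrightarrow> g' \<bullet> d' \<le> h' \<bullet> d'"
    by (auto simp: argmin_set_def)
  have inner_bound: "\<bar>x \<bullet> y\<bar> \<le> r * norm y" if "norm x \<le> r" for x y :: 'a and r
    using Cauchy_Schwarz_ineq2[of x y] mult_right_mono[OF that norm_ge_zero[of y]] by linarith
  obtain g e where "g \<in> S" "norm e \<le> \<delta>" "g' = g + e"
    using assms(1) \<open>g' \<in> S'\<close> by (auto simp: set_plus_def)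
  have "g \<bullet> d \<le> h \<bullet> d + (2 * \<delta> * norm d + 2 * R * norm (d' - d))" if "h \<in> S" for h
  proof -
    obtain h' e' where "h' \<in> S'" "norm e' \<le> \<delta>" "h = h' + e'"
      using assms(2) \<open>h \<in> S\<close> by (auto simp: set_plus_def)
    have "norm g' \<le> R" "norm h' \<le> R"
      using assms(3) \<open>g' \<in> S'\<close> \<open>h' \<in> S'\<close> by auto
    have "g \<bullet> d = g' \<bullet> d' + g' \<bullet> (d - d') - e \<bullet> d"
      by (simp add: \<open>g' = g + e\<close> inner_diff_right inner_add_left)
    also have "\<dots> \<le> h' \<bullet> d' + R * norm (d' - d) + \<delta> * norm d"
      using g'_min[OF \<open>h' \<in> S'\<close>] inner_bound[OF \<open>norm g' \<le> R\<close>, of "d - d'"]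
        inner_bound[OF \<open>norm e \<le> \<delta>\<close>, of d]
      by (simp add: norm_minus_commute)
    also have "h' \<bullet> d' = h \<bullet> d + h' \<bullet> (d' - d) - e' \<bullet> d"
      by (simp add: \<open>h = h' + e'\<close> inner_diff_right inner_add_left)
    also have "\<dots> \<le> h \<bullet> d + R * norm (d' - d) + \<delta> * norm d"
      using inner_bound[OF \<open>norm h' \<le> R\<close>, of "d' - d"] inner_bound[OF \<open>norm e' \<le> \<delta>\<close>, of d]
      by simp
    finally show ?thesis
      by simp
  qed
  moreover have "0 \<le> \<delta>" "0 \<le> R"
    using \<open>norm e \<le> \<delta>\<close> assms(3) \<open>g' \<in> S'\<close> by (auto dest!: subsetD intro: order_trans[OF norm_ge_zero])
  then have "0 \<le> 2 * \<delta> * norm d" "0 \<le> 2 * R * norm (d' - d)"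
    by simp_all
  then have "norm (g' - g) \<le> \<delta> + 2 * \<delta> * norm d + 2 * R * norm (d' - d)"
    using \<open>norm e \<le> \<delta>\<close> \<open>g' = g + e\<close> by simp
  ultimately show "g' \<in> approx_argmin S (\<lambda>g. g \<bullet> d) (\<delta> + 2 * \<delta> * norm d + 2 * R * norm (d' - d))"
    unfolding approx_argmin_iff using \<open>g \<in> S\<close> \<open>0 \<le> \<delta>\<close> by (intro bexI[of _ g]) force+
qed

lemma compact_Cset: "compact (Cset m gf (u::'a::euclidean_space))"
  unfolding Cset_def
  by (rule compact_convex_hull[OF finite_imp_compact]) (simp add: setcompr_eq_image)

lemma convex_Cset: "convex (Cset m gf u)"
  by (simp add: Cset_def)

lemma Cset_nonempty: "1 \<le> m \<Longrightarrow> Cset m gf u \<noteq> {}"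
  unfolding Cset_def by auto

lemma Cset_subset_cball:
  assumes "\<And>i. i \<in> {1..m} \<Longrightarrow> norm (gf i u) \<le> R"
  shows "Cset m gf u \<subseteq> cball 0 R"
  unfolding Cset_def using assms by (intro hull_minimal) auto

lemma Cset_subset_plus_cball:
  assumes "\<And>i. i \<in> {1..m} \<Longrightarrow> dist (gf i u') (gf i u) \<le> \<delta>"
  shows "Cset m gf u' \<subseteq> Cset m gf u + cball 0 \<delta>"
  unfolding Cset_def
proof (rule hull_minimal)
  show "{gf i u' |i. i \<in> {1..m}} \<subseteq> convex hull {gf i u |i. i \<in> {1..m}} + cball 0 \<delta>"
  proof clarify
    fix i :: nat
    assume "i \<in> {1..m}"
    then have "gf i u \<in> convex hull {gf i u |i. i \<in> {1..m}}" "gf i u' - gf i u \<in> cball 0 \<delta>"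
      using assms[of i] by (auto intro: hull_inc simp: dist_norm norm_minus_commute)
    then have "gf i u + (gf i u' - gf i u) \<in> convex hull {gf i u |i. i \<in> {1..m}} + cball 0 \<delta>"
      by (rule set_plus_intro)
    then show "gf i u' \<in> convex hull {gf i u |i. i \<in> {1..m}} + cball 0 \<delta>"
      by simp
  qed
qed (simp add: convex_set_plus)

lemma argmin_Cset_nonempty:
  fixes gf :: "nat \<Rightarrow> 'a::euclidean_space \<Rightarrow> 'a"
  assumes "1 \<le> m"
  shows "\<exists>g. g \<in> argmin_set (Cset m gf u) (\<lambda>g. g \<bullet> d)"
proof -
  have "continuous_on (Cset m gf u) (\<lambda>g. g \<bullet> d)"
    by (intro continuous_intros)
  then obtain g where "g \<in> Cset m gf u" "\<forall>h\<in>Cset m gf u. g \<bullet> d \<le> h \<bullet> d"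
    using continuous_attains_inf[OF compact_Cset Cset_nonempty[OF assms]] by blast
  then show ?thesis
    unfolding argmin_set_def by blast
qed

definition Gmap_approx ::
    "real \<Rightarrow> real \<Rightarrow> nat \<Rightarrow> (nat \<Rightarrow> 'a::real_inner \<Rightarrow> 'a) \<Rightarrow> real \<Rightarrow> 'a \<Rightarrow> 'a \<Rightarrow> ('a \<times> 'a) set" where
  "Gmap_approx \<epsilon> \<alpha> m gf t u v =
     cball v \<epsilon> \<times> ((\<lambda>g. - ((\<alpha> / t) *\<^sub>R v) - g) ` approx_argmin (Cset m gf u) (\<lambda>g. g \<bullet> (- v)) \<epsilon>)"

lemma compact_convex_Gmap_approx:
  fixes gf :: "nat \<Rightarrow> 'a::euclidean_space \<Rightarrow> 'a"
  shows "compact (Gmap_approx \<epsilon> \<alpha> m gf t u v) \<and> convex (Gmap_approx \<epsilon> \<alpha> m gf t u v)"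
proof -
  let ?A = "approx_argmin (Cset m gf u) (\<lambda>g. g \<bullet> (- v)) \<epsilon>" and ?c = "- ((\<alpha> / t) *\<^sub>R v)"
  have A: "compact ?A" "convex ?A"
    by (intro compact_approx_argmin compact_Cset continuous_intros convex_approx_argmin convex_Cset)+
  have image: "(\<lambda>g. ?c - g) ` ?A = (+) ?c ` ((\<lambda>g. - g) ` ?A)"
    unfolding image_image by (rule image_cong) simp_all
  have "compact ((\<lambda>g. ?c - g) ` ?A)"
    unfolding image by (rule compact_translation[OF compact_negations[OF A(1)]])
  moreover have "convex ((\<lambda>g. ?c - g) ` ?A)"
    unfolding image by (rule convex_translation[OF convex_negations[OF A(2)]])
  ultimately show ?thesis
    unfolding Gmap_approx_def by (blast intro: compact_Times convex_Times compact_cball convex_cball)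
qed

lemma Gmap_if_Gmap_approx:
  fixes gf :: "nat \<Rightarrow> 'a::euclidean_space \<Rightarrow> 'a"
  assumes "\<And>\<epsilon>. 0 < \<epsilon> \<Longrightarrow> w \<in> Gmap_approx \<epsilon> \<alpha> m gf t u v"
  shows "w \<in> Gmap \<alpha> m gf t u v"
proof -
  define g where "g = - ((\<alpha> / t) *\<^sub>R v) - snd w"
  have approx: "dist v (fst w) \<le> \<epsilon> \<and> g \<in> approx_argmin (Cset m gf u) (\<lambda>g. g \<bullet> (- v)) \<epsilon>"
    if "0 < \<epsilon>" for \<epsilon>
    using assms[OF that] by (auto simp: Gmap_approx_def g_def mem_Times_iff)
  then have "fst w = v"
    using field_le_epsilon[of "dist v (fst w)" 0] by (simp add: less_imp_le)
  moreover have "continuous_on UNIV (\<lambda>g. g \<bullet> (- v))"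
    by (intro continuous_intros)
  then have "g \<in> argmin_set (Cset m gf u) (\<lambda>g. g \<bullet> (- v))"
    using approx by (intro argmin_if_approx_argmin compact_imp_closed[OF compact_Cset]) auto
  moreover have "snd w = - ((\<alpha> / t) *\<^sub>R v) - g"
    by (simp add: g_def)
  ultimately show ?thesis
    unfolding Gmap_def by (metis mem_Times_iff imageI singletonI prod.collapse)
qed

lemma Gmap_subset_Gmap_approx:
  fixes gf :: "nat \<Rightarrow> 'a::euclidean_space \<Rightarrow> 'a"
  assumes close: "\<And>i. i \<in> {1..m} \<Longrightarrow> dist (gf i u') (gf i u) \<le> \<delta>"
    and bound: "\<And>i. i \<in> {1..m} \<Longrightarrow> norm (gf i u') \<le> R"
    and small: "dist v' v \<le> \<epsilon>"
      "\<delta> + 2 * \<delta> * norm v + 2 * R * norm (v' - v) + norm ((\<alpha> / s) *\<^sub>R v' - (\<alpha> / t) *\<^sub>R v) \<le> \<epsilon>"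
  shows "Gmap \<alpha> m gf s u' v' \<subseteq> Gmap_approx \<epsilon> \<alpha> m gf t u v"
proof clarify
  fix a b
  assume "(a, b) \<in> Gmap \<alpha> m gf s u' v'"
  then obtain g where "a = v'" "b = - ((\<alpha> / s) *\<^sub>R v') - g"
    and g: "g \<in> argmin_set (Cset m gf u') (\<lambda>g. g \<bullet> (- v'))"
    by (auto simp: Gmap_def)
  define e where "e = (\<alpha> / s) *\<^sub>R v' - (\<alpha> / t) *\<^sub>R v"
  have "Cset m gf u' \<subseteq> Cset m gf u + cball 0 \<delta>" "Cset m gf u \<subseteq> Cset m gf u' + cball 0 \<delta>"
    using close by (auto intro!: Cset_subset_plus_cball simp: dist_commute)
  then have "g \<in> approx_argmin (Cset m gf u) (\<lambda>g. g \<bullet> (- v))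
      (\<delta> + 2 * \<delta> * norm v + 2 * R * norm (v' - v))"
    using argmin_subset_approx_argmin[of "Cset m gf u'" "Cset m gf u" \<delta> R "- v'" "- v"]
      Cset_subset_cball[of m gf u' R] bound g
    by (auto simp: norm_minus_commute)
  then have "g + e \<in> approx_argmin (Cset m gf u) (\<lambda>g. g \<bullet> (- v))
      (\<delta> + 2 * \<delta> * norm v + 2 * R * norm (v' - v) + norm e)"
    by (rule approx_argmin_add) simp_all
  then have "g + e \<in> approx_argmin (Cset m gf u) (\<lambda>g. g \<bullet> (- v)) \<epsilon>"
    using approx_argmin_mono[OF small(2)] unfolding e_def by blast
  moreover have "b = - ((\<alpha> / t) *\<^sub>R v) - (g + e)"
    by (simp add: \<open>b = _\<close> e_def)
  ultimately show "(a, b) \<in> Gmap_approx \<epsilon> \<alpha> m gf t u v"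
    using small(1) \<open>a = v'\<close> by (auto simp: Gmap_approx_def dist_commute)
qed

lemma eventually_all_close:
  assumes "finite I" "\<And>i. i \<in> I \<Longrightarrow> isCont (f i) u" "(g \<longlongrightarrow> u) F" "0 < \<delta>"
  shows "\<forall>\<^sub>F x in F. \<forall>i\<in>I. dist (f i (g x)) (f i u) < \<delta>"
  using assms by (intro eventually_ball_finite ballI tendstoD[OF isCont_tendsto_compose]) auto

text \<open>The upper semicontinuity of \<open>G\<close> needed to pass to the limit in the Euler scheme.\<close>
lemma eventually_Gmap_subset_Gmap_approx:
  fixes gf :: "nat \<Rightarrow> 'a::euclidean_space \<Rightarrow> 'a"
  assumes "t \<noteq> 0" "0 < \<epsilon>" and cont: "\<And>i. i \<in> {1..m} \<Longrightarrow> isCont (gf i) u"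
  shows "\<forall>\<^sub>F (s, X) in nhds (t, u, v). Gmap \<alpha> m gf s (fst X) (snd X) \<subseteq> Gmap_approx \<epsilon> \<alpha> m gf t u v"
proof -
  define R where "R = (\<Sum>i\<in>{1..m}. norm (gf i u)) + 1"
  define \<delta> where "\<delta> = min 1 (\<epsilon> / (2 * (1 + 2 * norm v)))"
  have "0 < \<delta>" "\<delta> \<le> 1"
    using \<open>0 < \<epsilon>\<close> by (auto simp: \<delta>_def add_pos_nonneg)
  have "\<delta> * (2 * (1 + 2 * norm v)) \<le> \<epsilon>"
    using pos_le_divide_eq[of "2 * (1 + 2 * norm v)" \<delta> \<epsilon>] by (simp add: \<delta>_def add_pos_nonneg)
  then have \<delta>_small: "\<delta> + 2 * \<delta> * norm v \<le> \<epsilon> / 2"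
    by (simp add: algebra_simps)
  have "((\<lambda>p. fst (snd p)) \<longlongrightarrow> u) (nhds (t, u, v))"
    using tendsto_fst[OF tendsto_snd[OF filterlim_ident[of "nhds (t, u, v)"]]] by simp
  then have "\<forall>\<^sub>F p in nhds (t, u, v). \<forall>i\<in>{1..m}. dist (gf i (fst (snd p))) (gf i u) < \<delta>"
    using cont \<open>0 < \<delta>\<close> by (intro eventually_all_close) auto
  moreover
  define f where "f p = dist (snd (snd p)) v + 2 * R * norm (snd (snd p) - v)
      + norm ((\<alpha> / fst p) *\<^sub>R snd (snd p) - (\<alpha> / t) *\<^sub>R v)" for p :: "real \<times> 'a \<times> 'a"
  have "isCont f (t, u, v)"
    unfolding f_def using \<open>t \<noteq> 0\<close> by (intro continuous_intros) auto
  then have "(f \<longlongrightarrow> f (t, u, v)) (nhds (t, u, v))"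
    using filterlim_ident by (rule isCont_tendsto_compose)
  then have "(f \<longlongrightarrow> 0) (nhds (t, u, v))"
    by (simp add: f_def)
  then have "\<forall>\<^sub>F p in nhds (t, u, v). f p < \<epsilon> / 2"
    using \<open>0 < \<epsilon>\<close> by (intro order_tendstoD(2)) auto
  ultimately have "\<forall>\<^sub>F p in nhds (t, u, v). Gmap \<alpha> m gf (fst p) (fst (snd p)) (snd (snd p))
      \<subseteq> Gmap_approx \<epsilon> \<alpha> m gf t u v"
  proof eventually_elim
    case (elim p)
    have bound: "norm (gf i (fst (snd p))) \<le> R" if "i \<in> {1..m}" for i
    proof -
      have "norm (gf i u) \<le> (\<Sum>i\<in>{1..m}. norm (gf i u))"
        using that by (intro member_le_sum) auto
      moreover have "dist (gf i (fst (snd p))) (gf i u) < \<delta>"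
        using elim(1) that by blast
      ultimately show ?thesis
        using norm_triangle_sub[of "gf i (fst (snd p))" "gf i u"] \<open>\<delta> \<le> 1\<close>
        by (simp add: R_def dist_norm)
    qed
    have close: "dist (gf i (fst (snd p))) (gf i u) \<le> \<delta>" if "i \<in> {1..m}" for i
      using elim(1) that less_imp_le by blast
    have "0 \<le> 2 * R * norm (snd (snd p) - v)"
      by (simp add: R_def sum_nonneg)
    then have small: "dist (snd (snd p)) v \<le> \<epsilon>"
      "\<delta> + 2 * \<delta> * norm v + 2 * R * norm (snd (snd p) - v)
        + norm ((\<alpha> / fst p) *\<^sub>R snd (snd p) - (\<alpha> / t) *\<^sub>R v) \<le> \<epsilon>"
      using elim(2) \<delta>_small zero_le_dist[of "snd (snd p)" v]
        norm_ge_zero[of "(\<alpha> / fst p) *\<^sub>R snd (snd p) - (\<alpha> / t) *\<^sub>R v"]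
      unfolding f_def by linarith+
    show ?case
      by (rule Gmap_subset_Gmap_approx[where gf = gf and u' = "fst (snd p)" and u = u,
            OF close bound small])
  qed
  then show ?thesis
    by (simp add: case_prod_unfold)
qed

section \<open>Euler polygons\<close>

locale euler_scheme =
  fixes m :: nat and gf :: "nat \<Rightarrow> 'a::euclidean_space \<Rightarrow> 'a" and \<alpha> t0 M :: real and u0 v0 :: 'a
  assumes m: "1 \<le> m" and gf_cont: "\<And>i. i \<in> {1..m} \<Longrightarrow> continuous_on UNIV (gf i)"
    and \<alpha>: "0 < \<alpha>" and t0: "0 < t0"
    and gf_bound: "\<And>i u. i \<in> {1..m} \<Longrightarrow> u \<in> cball u0 1 \<Longrightarrow> norm (gf i u) \<le> M"
begin

definition gsel :: "'a \<Rightarrow> 'a \<Rightarrow> 'a" where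
  "gsel u v = (SOME g. g \<in> argmin_set (Cset m gf u) (\<lambda>g. g \<bullet> (- v)))"

lemma gsel_argmin: "gsel u v \<in> argmin_set (Cset m gf u) (\<lambda>g. g \<bullet> (- v))"
  unfolding gsel_def by (rule someI_ex[OF argmin_Cset_nonempty[OF m]])

definition field :: "real \<Rightarrow> 'a \<times> 'a \<Rightarrow> 'a \<times> 'a" where
  "field t X = (snd X, - ((\<alpha> / t) *\<^sub>R snd X) - gsel (fst X) (snd X))"

lemma field_in_Gmap: "field t X \<in> Gmap \<alpha> m gf t (fst X) (snd X)"
  using gsel_argmin unfolding field_def Gmap_def by blast

definition field_bound :: real where
  "field_bound = (norm v0 + 1) * (1 + \<alpha> / t0) + M"

text \<open>On \<open>[t0, T]\<close> the Euler polygons stay within distance 1 of \<open>(u0, v0)\<close>, where the field is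
  bounded by \<open>field_bound\<close>.\<close>
definition \<tau> :: real where
  "\<tau> = 1 / (field_bound + 1)"

definition T :: real where
  "T = t0 + \<tau>"

lemma field_bound_nonneg: "0 \<le> field_bound"
proof -
  have "norm (gf 1 u0) \<le> M"
    using gf_bound m by simp
  then have "0 \<le> M"
    using norm_ge_zero order_trans by blast
  then show ?thesis
    using \<alpha> t0 by (simp add: field_bound_def)
qed

lemma \<tau>_pos: "0 < \<tau>" and \<tau>_field_bound: "\<tau> * field_bound \<le> 1"
  using field_bound_nonneg by (simp_all add: \<tau>_def field_simps)

lemma norm_field_le:
  assumes "t0 \<le> t" "dist X (u0, v0) \<le> 1"
  shows "norm (field t X) \<le> field_bound"
proof -
  obtain u v where X: "X = (u, v)"
    by fastforce
  have "dist u u0 \<le> 1" "norm (v - v0) \<le> 1"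
    using assms(2) X dist_fst_le[of X "(u0, v0)"] dist_snd_le[of X "(u0, v0)"] by (auto simp: dist_norm)
  then have u: "u \<in> cball u0 1" and v: "norm v \<le> norm v0 + 1"
    using norm_triangle_sub[of v v0] by (auto simp: dist_commute)
  have "gsel u v \<in> Cset m gf u"
    using gsel_argmin by (auto simp: argmin_set_def)
  then have "norm (gsel u v) \<le> M"
    using Cset_subset_cball[of m gf u M] gf_bound u by auto
  have "norm ((\<alpha> / t) *\<^sub>R v) \<le> \<alpha> / t0 * (norm v0 + 1)"
    using assms(1) \<alpha> t0 v by (simp add: abs_of_pos frac_le mult_mono)
  then have "norm (field t X) \<le> norm v + (\<alpha> / t0 * (norm v0 + 1) + M)"
    using \<open>norm (gsel u v) \<le> M\<close> norm_Pair_le[of v "- ((\<alpha> / t) *\<^sub>R v) - gsel u v"]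
      norm_triangle_ineq4[of "- ((\<alpha> / t) *\<^sub>R v)" "gsel u v"]
    by (simp add: field_def X)
  then show ?thesis
    using v by (simp add: field_bound_def algebra_simps)
qed

primrec euler :: "real \<Rightarrow> nat \<Rightarrow> 'a \<times> 'a" where
  "euler h 0 = (u0, v0)"
| "euler h (Suc k) = euler h k + h *\<^sub>R field (t0 + real k * h) (euler h k)"

lemma dist_euler_le:
  assumes "0 < (h::real)" "real k * h \<le> \<tau>"
  shows "dist (euler h k) (u0, v0) \<le> real k * h * field_bound"
  using assms(2)
proof (induction k)
  case (Suc k)
  then have "real k * h \<le> \<tau>"
    using assms(1) by (simp add: algebra_simps)
  with Suc.IH have IH: "dist (euler h k) (u0, v0) \<le> real k * h * field_bound" .
  also have "\<dots> \<le> 1"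
    using \<open>real k * h \<le> \<tau>\<close> \<tau>_field_bound field_bound_nonneg by (meson mult_right_mono order_trans)
  finally have "norm (field (t0 + real k * h) (euler h k)) \<le> field_bound"
    using assms(1) by (intro norm_field_le) auto
  then have "dist (euler h (Suc k)) (euler h k) \<le> h * field_bound"
    using assms(1) by (simp add: dist_norm mult_left_mono)
  then show ?case
    using IH dist_triangle[of "euler h (Suc k)" "(u0, v0)" "euler h k"] by (simp add: algebra_simps)
qed simp

definition step :: "real \<Rightarrow> real \<Rightarrow> nat" where
  "step h t = nat \<lfloor>(t - t0) / h\<rfloor>"

definition polygon :: "real \<Rightarrow> real \<Rightarrow> 'a \<times> 'a" where
  "polygon h t =
     (let k = step h t; tk = t0 + real k * h in euler h k + (t - tk) *\<^sub>R field tk (euler h k))"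

lemma step_eq:
  assumes "0 < h" "t0 + real k * h \<le> t" "t < t0 + (real k + 1) * h"
  shows "step h t = k"
proof -
  have "k \<le> (t - t0) / h" "(t - t0) / h < k + 1"
    using assms by (simp_all add: pos_le_divide_eq pos_divide_less_eq algebra_simps)
  then show ?thesis
    unfolding step_def by linarith
qed

lemma step_bounds:
  assumes "0 < h" "t0 \<le> t"
  shows "t0 + real (step h t) * h \<le> t" "t < t0 + (real (step h t) + 1) * h"
proof -
  have "real (step h t) = \<lfloor>(t - t0) / h\<rfloor>"
    using assms by (simp add: step_def)
  then have "step h t \<le> (t - t0) / h" "(t - t0) / h < step h t + 1"
    using floor_correct[of "(t - t0) / h"] by linarith+
  then show "t0 + real (step h t) * h \<le> t" "t < t0 + (real (step h t) + 1) * h"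
    using assms(1) by (simp_all add: pos_le_divide_eq pos_divide_less_eq algebra_simps)
qed

lemma polygon_eq:
  assumes "0 < h" "t0 + real k * h \<le> t" "t \<le> t0 + (real k + 1) * h"
  shows "polygon h t = euler h k + (t - (t0 + real k * h)) *\<^sub>R field (t0 + real k * h) (euler h k)"
proof (cases "t = t0 + (real k + 1) * h")
  case True
  then have "step h t = Suc k"
    using assms(1) by (intro step_eq) (auto simp: algebra_simps)
  then show ?thesis
    using True by (simp add: polygon_def Let_def algebra_simps)
qed (use assms step_eq in \<open>simp add: polygon_def Let_def\<close>)

lemma polygon_t0: "0 < h \<Longrightarrow> polygon h t0 = (u0, v0)"
  using polygon_eq[of h 0 t0] by simp

lemma polygon_has_vector_derivative:
  assumes "0 < h" "t0 + real k * h < t" "t < t0 + (real k + 1) * h"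
  shows "(polygon h has_vector_derivative field (t0 + real k * h) (euler h k)) (at t)"
proof (rule has_vector_derivative_transform_within_open
    [where S = "{t0 + real k * h<..<t0 + (real k + 1) * h}"])
  show "((\<lambda>s. euler h k + (s - (t0 + real k * h)) *\<^sub>R field (t0 + real k * h) (euler h k))
      has_vector_derivative field (t0 + real k * h) (euler h k)) (at t)"
    by (auto intro!: derivative_eq_intros)
next
  fix s
  assume "s \<in> {t0 + real k * h<..<t0 + (real k + 1) * h}"
  then show "euler h k + (s - (t0 + real k * h)) *\<^sub>R field (t0 + real k * h) (euler h k) = polygon h s"
    using polygon_eq[OF assms(1), of k s] by simp
qed (use assms in auto)

lemma norm_field_euler_le:
  assumes "0 < h" "real k * h \<le> \<tau>"
  shows "norm (field (t0 + real k * h) (euler h k)) \<le> field_bound"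
proof (rule norm_field_le)
  have "real k * h * field_bound \<le> 1"
    using assms(2) \<tau>_field_bound field_bound_nonneg by (meson mult_right_mono order_trans)
  then show "dist (euler h k) (u0, v0) \<le> 1"
    using dist_euler_le[OF assms] by linarith
qed (use assms(1) in simp)

lemma continuous_on_polygon:
  assumes "0 < h"
  shows "continuous_on {t0..t0 + real j * h} (polygon h)"
proof (induction j)
  case (Suc j)
  have "continuous_on {t0 + real j * h..t0 + (real j + 1) * h}
      (\<lambda>t. euler h j + (t - (t0 + real j * h)) *\<^sub>R field (t0 + real j * h) (euler h j))"
    by (intro continuous_intros)
  then have "continuous_on {t0 + real j * h..t0 + (real j + 1) * h} (polygon h)"
    using polygon_eq[OF assms, of j] by (auto intro: continuous_on_eq)
  moreover have "t0 \<le> t0 + real j * h" "t0 + real j * h \<le> t0 + (real j + 1) * h"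
    using assms by simp_all
  then have "{t0..t0 + real (Suc j) * h}
      = {t0..t0 + real j * h} \<union> {t0 + real j * h..t0 + (real j + 1) * h}"
    by (simp add: ivl_disj_un_two_touch(4) add.commute)
  ultimately show ?case
    using Suc.IH by (auto intro: continuous_on_closed_Un)
qed simp

lemma polygon_has_vector_derivative_off_grid:
  assumes "0 < h" "t0 < s" "s \<notin> range (\<lambda>k. t0 + real k * h)"
  shows "(polygon h has_vector_derivative field (t0 + real (step h s) * h) (euler h (step h s))) (at s)"
proof (rule polygon_has_vector_derivative[OF assms(1)])
  show "t0 + real (step h s) * h < s"
    using step_bounds(1)[OF assms(1), of s] assms(2,3) by (metis less_imp_le order_le_less rangeI)
qed (use step_bounds(2)[OF assms(1)] assms(2) in simp)

lemma finite_grid: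
  assumes "0 < h"
  shows "finite (range (\<lambda>k. t0 + real k * h) \<inter> {..b})"
proof -
  obtain N :: nat where "b - t0 \<le> real N * h"
    using reals_Archimedean3[OF assms] by (meson less_imp_le)
  have "range (\<lambda>k. t0 + real k * h) \<inter> {..b} \<subseteq> (\<lambda>k. t0 + real k * h) ` {..N}"
  proof clarify
    fix k
    assume "t0 + real k * h \<le> b"
    then have "real k * h \<le> real N * h"
      using \<open>b - t0 \<le> real N * h\<close> by linarith
    then have "k \<le> N"
      using assms by simp
    then show "t0 + real k * h \<in> (\<lambda>k. t0 + real k * h) ` {..N}"
      by auto
  qed
  then show ?thesis
    by (rule finite_subset) simp
qed

lemma lipschitz_polygon:
  assumes "0 < h"
  shows "field_bound-lipschitz_on {t0..T} (polygon h)"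
proof -
  have "continuous_on {t0..T} (polygon h)"
  proof -
    obtain N :: nat where "T - t0 \<le> real N * h"
      using reals_Archimedean3[OF assms] by (meson less_imp_le)
    then show ?thesis
      by (intro continuous_on_subset[OF continuous_on_polygon[OF assms, of N]]) auto
  qed
  have increment: "dist (polygon h b) (polygon h a) \<le> field_bound * (b - a)"
    if ab: "t0 \<le> a" "a < b" "b \<le> T" for a b
  proof -
    have "(polygon h b - polygon h a) /\<^sub>R (b - a) \<in> cball 0 field_bound"
    proof (rule difference_quotient_in_closed_convex[of a b "range (\<lambda>k. t0 + real k * h) \<inter> {..b}"])
      fix s
      assume s: "s \<in> {a<..<b} - range (\<lambda>k. t0 + real k * h) \<inter> {..b}"
      moreover have "real (step h s) * h \<le> \<tau>"
        using step_bounds(1)[OF assms, of s] s ab by (auto simp: T_def)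
      ultimately show "\<exists>d\<in>cball 0 field_bound. (polygon h has_vector_derivative d) (at s)"
        using polygon_has_vector_derivative_off_grid[OF assms, of s] norm_field_euler_le[OF assms] ab
        by auto
    qed (use ab finite_grid[OF assms] continuous_on_subset[OF \<open>continuous_on {t0..T} (polygon h)\<close>] in auto)
    then show ?thesis
      using ab by (simp add: dist_norm divide_simps norm_minus_commute)
  qed
  show ?thesis
  proof (intro lipschitz_onI)
    fix a b
    assume "a \<in> {t0..T}" "b \<in> {t0..T}"
    then show "dist (polygon h a) (polygon h b) \<le> field_bound * dist a b"
      using increment[of a b] increment[of b a]
      by (cases a b rule: linorder_cases) (auto simp: dist_real_def dist_commute)
  qed (rule field_bound_nonneg)
qed

lemma dist_grid_point_le:
  assumes "0 < h" "t0 \<le> t" "t \<le> s" "s \<le> T"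
  shows "dist (t0 + real (step h s) * h, euler h (step h s)) (t, y)
    \<le> (1 + field_bound) * (h + (s - t)) + dist (polygon h t) y"
proof -
  let ?k = "step h s"
  let ?tk = "t0 + real ?k * h"
  have "?tk \<le> s" "s < ?tk + h"
    using step_bounds[OF assms(1), of s] assms by (auto simp: algebra_simps)
  then have tk: "\<bar>?tk - t\<bar> \<le> h + (s - t)" "t0 \<le> ?tk" "?tk \<le> T"
    using assms by auto
  have "euler h ?k = polygon h ?tk"
    using polygon_eq[OF assms(1), of ?k ?tk] assms(1) by simp
  then have "dist (euler h ?k) y \<le> dist (polygon h ?tk) (polygon h t) + dist (polygon h t) y"
    by (simp add: dist_triangle)
  also have "\<dots> \<le> field_bound * \<bar>?tk - t\<bar> + dist (polygon h t) y"
    using lipschitz_onD[OF lipschitz_polygon[OF assms(1)], of ?tk t] tk assms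
    by (simp add: dist_real_def)
  finally have "dist (euler h ?k) y \<le> field_bound * (h + (s - t)) + dist (polygon h t) y"
    using mult_left_mono[OF tk(1) field_bound_nonneg] by linarith
  moreover have "dist (?tk, euler h ?k) (t, y) \<le> \<bar>?tk - t\<bar> + dist (euler h ?k) y"
    using norm_Pair_le[of "?tk - t" "euler h ?k - y"] by (simp add: dist_norm)
  ultimately show ?thesis
    using tk(1) by (simp add: algebra_simps)
qed

lemma eventually_grid_points_near:
  assumes hs: "\<And>n. 0 < hs n" "hs \<longlonglongrightarrow> 0"
    and lim: "(\<lambda>n. polygon (hs n) t) \<longlonglongrightarrow> y"
    and t: "t0 < t" "t < T" and "0 < d"
  obtains \<eta> where "0 < \<eta>" "t + \<eta> \<le> T"
    "\<forall>\<^sub>F n in sequentially. \<forall>s\<in>{t<..<t + \<eta>}.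
       dist (t0 + real (step (hs n) s) * hs n, euler (hs n) (step (hs n) s)) (t, y) < d"
proof -
  define \<eta> where "\<eta> = min (d / (4 * (1 + field_bound))) (T - t)"
  have "0 < \<eta>" "t + \<eta> \<le> T"
    using \<open>0 < d\<close> t field_bound_nonneg by (auto simp: \<eta>_def)
  have "\<eta> * (4 * (1 + field_bound)) \<le> d"
    using field_bound_nonneg pos_le_divide_eq[of "4 * (1 + field_bound)" \<eta> d] by (simp add: \<eta>_def)
  then have \<eta>_small: "(1 + field_bound) * (2 * \<eta>) \<le> d / 2"
    by (simp add: algebra_simps)
  have "\<forall>\<^sub>F n in sequentially. hs n < \<eta>"
    using hs(2) \<open>0 < \<eta>\<close> by (rule order_tendstoD)
  moreover have "\<forall>\<^sub>F n in sequentially. dist (polygon (hs n) t) y < d / 4"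
    using lim \<open>0 < d\<close> by (intro tendstoD) auto
  ultimately have "\<forall>\<^sub>F n in sequentially. \<forall>s\<in>{t<..<t + \<eta>}.
      dist (t0 + real (step (hs n) s) * hs n, euler (hs n) (step (hs n) s)) (t, y) < d"
  proof eventually_elim
    case (elim n)
    show ?case
    proof
      fix s
      assume s: "s \<in> {t<..<t + \<eta>}"
      have "hs n + (s - t) \<le> 2 * \<eta>"
        using elim(1) s by auto
      then have "(1 + field_bound) * (hs n + (s - t)) \<le> (1 + field_bound) * (2 * \<eta>)"
        using field_bound_nonneg by (intro mult_left_mono) auto
      moreover have "dist (t0 + real (step (hs n) s) * hs n, euler (hs n) (step (hs n) s)) (t, y)
          \<le> (1 + field_bound) * (hs n + (s - t)) + dist (polygon (hs n) t) y"
        using s t \<open>t + \<eta> \<le> T\<close> by (intro dist_grid_point_le hs(1)) auto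
      ultimately show "dist (t0 + real (step (hs n) s) * hs n, euler (hs n) (step (hs n) s)) (t, y) < d"
        using elim(2) \<eta>_small \<open>0 < d\<close> by linarith
    qed
  qed
  with \<open>0 < \<eta>\<close> \<open>t + \<eta> \<le> T\<close> show thesis
    by (rule that)
qed

text \<open>Near \<open>t\<close>, the slopes of the polygons are values of \<open>G\<close> at grid points close to \<open>(t, x t)\<close>.\<close>
lemma derivative_of_limit_in_Gmap:
  assumes hs: "\<And>n. 0 < hs n" "hs \<longlonglongrightarrow> 0"
    and lim: "\<And>s. s \<in> {t0..T} \<Longrightarrow> (\<lambda>n. polygon (hs n) s) \<longlonglongrightarrow> x s"
    and t: "t0 < t" "t < T" and x': "(x has_vector_derivative w) (at t)"
  shows "w \<in> Gmap \<alpha> m gf t (fst (x t)) (snd (x t))"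
proof (rule Gmap_if_Gmap_approx)
  fix \<epsilon> :: real
  assume "0 < \<epsilon>"
  let ?K = "Gmap_approx \<epsilon> \<alpha> m gf t (fst (x t)) (snd (x t))"
  have "\<forall>\<^sub>F (s, X) in nhds (t, x t). Gmap \<alpha> m gf s (fst X) (snd X) \<subseteq> ?K"
    using eventually_Gmap_subset_Gmap_approx
        [where gf = gf and u = "fst (x t)" and v = "snd (x t)" and \<alpha> = \<alpha>]
      t t0 \<open>0 < \<epsilon>\<close> gf_cont
    by (simp add: continuous_on_eq_continuous_at)
  then obtain d where "0 < d"
    and d: "\<And>s X. dist (s, X) (t, x t) < d \<Longrightarrow> Gmap \<alpha> m gf s (fst X) (snd X) \<subseteq> ?K"
    unfolding eventually_nhds_metric by auto
  obtain \<eta> where "0 < \<eta>" "t + \<eta> \<le> T" and near: "\<forall>\<^sub>F n in sequentially. \<forall>s\<in>{t<..<t + \<eta>}.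
      dist (t0 + real (step (hs n) s) * hs n, euler (hs n) (step (hs n) s)) (t, x t) < d"
    using eventually_grid_points_near[OF hs lim t \<open>0 < d\<close>] t by auto
  show "w \<in> ?K"
  proof (rule has_vector_derivative_in_closed_convex_of_limit[OF _ _ \<open>0 < \<eta>\<close> _ _ x'])
    show "closed ?K" "convex ?K"
      using compact_convex_Gmap_approx compact_imp_closed by blast+
    show "(\<lambda>n. polygon (hs n) s) \<longlonglongrightarrow> x s" if "s \<in> {t..t + \<eta>}" for s
      using that t \<open>t + \<eta> \<le> T\<close> by (intro lim) auto
    show "\<forall>\<^sub>F n in sequentially. continuous_on {t..t + \<eta>} (polygon (hs n)) \<and>
      (\<exists>F. finite F \<and> (\<forall>s\<in>{t<..<t + \<eta>} - F. \<exists>d\<in>?K. (polygon (hs n) has_vector_derivative d) (at s)))"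
      using near
    proof eventually_elim
      case (elim n)
      have "continuous_on {t..t + \<eta>} (polygon (hs n))"
        using t \<open>t + \<eta> \<le> T\<close>
        by (intro continuous_on_subset[OF lipschitz_on_continuous_on[OF lipschitz_polygon[OF hs(1)]]])
          auto
      moreover have "\<exists>d\<in>?K. (polygon (hs n) has_vector_derivative d) (at s)"
        if s: "s \<in> {t<..<t + \<eta>} - range (\<lambda>k. t0 + real k * hs n) \<inter> {..T}" for s
      proof -
        have "field (t0 + real (step (hs n) s) * hs n) (euler (hs n) (step (hs n) s)) \<in> ?K"
          using d elim s field_in_Gmap by blast
        moreover have "s \<notin> range (\<lambda>k. t0 + real k * hs n)"
          using s t \<open>t + \<eta> \<le> T\<close> by auto
        ultimately show ?thesis
          using polygon_has_vector_derivative_off_grid[OF hs(1), of s] s t by auto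
      qed
      ultimately show ?case
        using finite_grid[OF hs(1)] by blast
    qed
  qed
qed

lemma exists_lipschitz_solution:
  obtains x where "field_bound-lipschitz_on UNIV x" "x t0 = (u0, v0)"
    "\<And>t w. t \<in> {t0<..<T} \<Longrightarrow> (x has_vector_derivative w) (at t) \<Longrightarrow>
       w \<in> Gmap \<alpha> m gf t (fst (x t)) (snd (x t))"
proof -
  define h where "h n = \<tau> / Suc n" for n
  have h: "0 < h n" for n
    using \<tau>_pos by (simp add: h_def)
  have "h \<longlonglongrightarrow> 0"
    unfolding h_def using tendsto_mult_right_zero[OF LIMSEQ_inverse_real_of_nat, of \<tau>]
    by (simp add: divide_inverse)
  obtain y r where "strict_mono r" and lim: "\<And>s. s \<in> {t0..T} \<Longrightarrow> (\<lambda>n. polygon (h (r n)) s) \<longlonglongrightarrow> y s"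
  proof (rule Arzela_Ascoli_lipschitz[of field_bound t0 T "\<lambda>n. polygon (h n)" "norm (u0, v0)"])
    show "field_bound-lipschitz_on {t0..T} (polygon (h n))" for n
      by (rule lipschitz_polygon[OF h])
    show "norm (polygon (h n) t0) \<le> norm (u0, v0)" for n
      by (simp add: polygon_t0 h)
  qed (rule that)
  have "field_bound-lipschitz_on {t0..T} y"
    by (rule lipschitz_on_limit[OF lipschitz_polygon[OF h] lim])
  moreover have "t0 \<le> T"
    using \<tau>_pos by (simp add: T_def)
  ultimately have "field_bound-lipschitz_on UNIV (\<lambda>t. y (clamp t0 T t))"
    by (rule lipschitz_on_clamp)
  moreover have "(\<lambda>n. polygon (h (r n)) t0) \<longlonglongrightarrow> (u0, v0)"
    by (simp add: polygon_t0 h)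
  then have "y (clamp t0 T t0) = (u0, v0)"
    using LIMSEQ_unique[OF lim[of t0]] \<open>t0 \<le> T\<close> by simp
  moreover have "w \<in> Gmap \<alpha> m gf t (fst (y (clamp t0 T t))) (snd (y (clamp t0 T t)))"
    if t: "t \<in> {t0<..<T}" and y': "((\<lambda>t. y (clamp t0 T t)) has_vector_derivative w) (at t)" for t w
  proof (rule derivative_of_limit_in_Gmap[OF h _ _ _ _ y'])
    show "(\<lambda>n. h (r n)) \<longlonglongrightarrow> 0"
      using LIMSEQ_subseq_LIMSEQ[OF \<open>h \<longlonglongrightarrow> 0\<close> \<open>strict_mono r\<close>] by (simp add: comp_def)
    show "(\<lambda>n. polygon (h (r n)) s) \<longlonglongrightarrow> y (clamp t0 T s)" if "s \<in> {t0..T}" for s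
      using lim[OF that] that by simp
  qed (use t in auto)
  ultimately show thesis
    by (rule that)
qed

end

lemma continuous_family_bounded:
  assumes "finite I" "compact S" "\<And>i. i \<in> I \<Longrightarrow> continuous_on S (f i)"
  obtains B where "\<And>i x. i \<in> I \<Longrightarrow> x \<in> S \<Longrightarrow> norm (f i x) \<le> B"
proof -
  have "compact (\<Union>i\<in>I. f i ` S)"
    using assms by (intro compact_UN compact_continuous_image) auto
  then obtain B where "\<forall>y\<in>(\<Union>i\<in>I. f i ` S). norm y \<le> B"
    using compact_imp_bounded bounded_iff by metis
  then show thesis
    using that by blast
qed

lemma lipschitz_on_imp_abs_continuous_on:
  assumes lip: "L-lipschitz_on {a..b} f"
  shows "abs_continuous_on a b f"
  unfolding abs_continuous_on_def
proof (intro allI impI)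
  fix \<epsilon> :: real
  assume "0 < \<epsilon>"
  have L: "0 \<le> L"
    using lip lipschitz_on_nonneg by blast
  have sum_bound: "(\<Sum>k<n. norm (f (t k) - f (s k))) < \<epsilon>"
    if st: "\<forall>k<n. a \<le> s k \<and> s k \<le> t k \<and> t k \<le> b" and small: "(\<Sum>k<n. t k - s k) < \<epsilon> / (L + 1)"
    for n :: nat and s t :: "nat \<Rightarrow> real"
  proof -
    have "norm (f (t k) - f (s k)) \<le> L * (t k - s k)" if "k < n" for k
      using st that lipschitz_on_normD[OF lip, of "t k" "s k"] by auto
    then have "(\<Sum>k<n. norm (f (t k) - f (s k))) \<le> (\<Sum>k<n. L * (t k - s k))"
      by (intro sum_mono) simp
    also have "\<dots> = L * (\<Sum>k<n. t k - s k)"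
      by (simp add: sum_distrib_left)
    also have "\<dots> \<le> L * (\<epsilon> / (L + 1))"
      using small L by (intro mult_left_mono) auto
    also have "\<dots> < \<epsilon>"
      using L \<open>0 < \<epsilon>\<close> by (simp add: field_simps)
    finally show ?thesis .
  qed
  show "\<exists>\<delta>>0. \<forall>(n::nat) s t. (\<forall>k<n. a \<le> s k \<and> s k \<le> t k \<and> t k \<le> b) \<and>
      (\<forall>j<n. \<forall>k<n. j \<noteq> k \<longrightarrow> t j \<le> s k \<or> t k \<le> s j) \<and> (\<Sum>k<n. t k - s k) < \<delta> \<longrightarrow>
      (\<Sum>k<n. norm (f (t k) - f (s k))) < \<epsilon>"
  proof (intro exI[of _ "\<epsilon> / (L + 1)"] conjI allI impI)
    show "0 < \<epsilon> / (L + 1)"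
      using L \<open>0 < \<epsilon>\<close> by simp
  qed (use sum_bound in blast)
qed

lemma AE_has_vector_derivative_if_lipschitz:
  fixes x :: "real \<Rightarrow> 'a::euclidean_space"
  assumes "L-lipschitz_on UNIV x"
    and "\<And>t w. t \<in> {a<..<b} \<Longrightarrow> (x has_vector_derivative w) (at t) \<Longrightarrow> P t w"
  shows "AE t in lebesgue. t \<in> {a<..b} \<longrightarrow> (\<exists>w. (x has_vector_derivative w) (at t) \<and> P t w)"
proof (rule AE_I')
  show "{t. \<not> x differentiable (at t)} \<union> {b} \<in> null_sets lebesgue"
    using negligible_nondifferentiable_lipschitz[OF assms(1)] by (simp add: negligible_iff_null_sets)
  show "{t \<in> space lebesgue. \<not> (t \<in> {a<..b} \<longrightarrow> (\<exists>w. (x has_vector_derivative w) (at t) \<and> P t w))}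
      \<subseteq> {t. \<not> x differentiable (at t)} \<union> {b}"
    using assms(2) vector_derivative_works by fastforce
qed

theorem theorem3p4:
  fixes f :: "nat \<Rightarrow> 'a::euclidean_space \<Rightarrow> real"
    and gf :: "nat \<Rightarrow> 'a \<Rightarrow> 'a"
    and m :: nat and \<alpha> t0 :: real and u0 v0 :: 'a
  assumes m: "m \<ge> 1"
    and convex: "\<And>i. i \<in> {1..m} \<Longrightarrow> convex_on UNIV (f i)"
    and grad: "\<And>i x. i \<in> {1..m} \<Longrightarrow> (f i has_derivative (\<lambda>h. gf i x \<bullet> h)) (at x)"
    and grad_cont: "\<And>i. i \<in> {1..m} \<Longrightarrow> continuous_on UNIV (gf i)"
    and grad_lip: "\<And>i. i \<in> {1..m} \<Longrightarrow> \<exists>L. L-lipschitz_on UNIV (gf i)"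
    and \<alpha>: "\<alpha> > 0" and t0: "t0 > 0"
  shows "\<exists>T > t0. \<exists>u v :: real \<Rightarrow> 'a.
           abs_continuous_on t0 T (\<lambda>t. (u t, v t)) \<and>
           (AE t in lebesgue. t \<in> {t0<..T} \<longrightarrow>
              (\<exists>w. ((\<lambda>s. (u s, v s)) has_vector_derivative w) (at t) \<and>
                   w \<in> Gmap \<alpha> m gf t (u t) (v t))) \<and>
           u t0 = u0 \<and> v t0 = v0"
proof -
  obtain M where "\<And>i u. i \<in> {1..m} \<Longrightarrow> u \<in> cball u0 1 \<Longrightarrow> norm (gf i u) \<le> M"
    using continuous_family_bounded[of "{1..m}" "cball u0 1" gf] grad_cont
    by (metis compact_cball continuous_on_subset finite_atLeastAtMost subset_UNIV)
  then interpret euler_scheme m gf \<alpha> t0 M u0 v0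
    using m grad_cont \<alpha> t0 by unfold_locales auto
  obtain x where lip: "field_bound-lipschitz_on UNIV x" and "x t0 = (u0, v0)"
    and x': "\<And>t w. t \<in> {t0<..<T} \<Longrightarrow> (x has_vector_derivative w) (at t) \<Longrightarrow>
       w \<in> Gmap \<alpha> m gf t (fst (x t)) (snd (x t))"
    by (rule exists_lipschitz_solution) (rule that)
  have "abs_continuous_on t0 T x"
    by (rule lipschitz_on_imp_abs_continuous_on[OF lipschitz_on_subset[OF lip]]) simp
  moreover have "AE t in lebesgue. t \<in> {t0<..T} \<longrightarrow>
      (\<exists>w. (x has_vector_derivative w) (at t) \<and> w \<in> Gmap \<alpha> m gf t (fst (x t)) (snd (x t)))"
    using lip x' by (rule AE_has_vector_derivative_if_lipschitz)
  moreover have "t0 < T"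
    using \<tau>_pos by (simp add: T_def)
  ultimately show ?thesis
    using \<open>x t0 = (u0, v0)\<close>
    by (intro exI[of _ T] conjI exI[of _ "\<lambda>t. fst (x t)"] exI[of _ "\<lambda>t. snd (x t)"]) auto
qed

end
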